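(* For every composition $I$ (of some integer $n\ge 1$), \[ \mathrm{PT}^A_I(q)\;=\;e_I(q)\;=\;\sum_{J\succeq I}\left(-\tfrac{1}{q}\right)^{\ell(I)-\ell(J)}q^{-\mathrm{st}'(I,J)}\,\mathrm{QFact}_A(J), \] where the sum runs over all compositions $J$ of $n$ coarser than or equal to $I$.
   Context: Compositions: a composition of $n$ is a sequence $I=(i_1,\dots,i_r)$ of positive integers with sum $n$; $\ell(I)=r$; $\mathrm{Des}(I)=\{i_1,i_1+i_2,\dots,i_1+\dots+i_{r-1}\}$. $I$ is finer than $J$ (equivalently $J$ is coarser than $I$), written $I\preceq J$ or $J\succeq I$, if $\mathrm{Des}(I)\supseteq\mathrm{Des}(J)$. For $I\preceq J$ set $\mathrm{st}'(I,J)=\#\{(a,b)\in\mathrm{Des}(I)\times\mathrm{Des}(J): a\le b\}$ and $\mathrm{st}(I,J)=\#\{(a,b)\in\mathrm{Des}(I)\times\mathrm{Des}(J): a\ge b\}$. $[m]_q=1+q+\dots+q^{m-1}$, and $\mathrm{QFact}_A(j_1,\dots,j_p)=[p]_q^{j_1}[p-1]_q^{j_2}\cdots[2]_q^{j_{p-1}}[1]_q^{j_p}$. Permutation tableaux: let $k\ge1$ and let $\lambda=(\lambda_1\ge\dots\ge\lambda_k\ge0)$ be a Young diagram with exactly $k$ rows (rows of length $0$ allowed) and exactly $n-k$ (nonempty) columns, drawn in French convention (rows left-justified, longest row at the bottom). Encode $\lambda$ by the composition $I=(i_1,\dots,i_k)$ of $n$ where, for $1\le t\le k$, $i_t-1$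 is the number of columns of length $k-t+1$; this is a bijection between such diagrams and compositions of $n$ with $k$ parts. A (type A) permutation tableau of shape $\lambda$ is a filling of the boxes of $\lambda$ with $0$'s and $1$'s such that (1) every column contains at least one $1$, and (2) no box containing a $0$ has both a $1$ below it in the same column and a $1$ to its left in the same row. Its rank is (number of $1$'s) minus (number of columns). $\mathrm{PT}^A_I(q)=\sum_T q^{\mathrm{rank}(T)}$, over permutation tableaux $T$ of the shape encoded by $I$. Algebraic setting: work over $\mathbb{K}(q)$, $\mathbb K$ a field of characteristic $0$. A packed word is a finite word over positive integers whose set of letters is $\{1,\dots,m\}$ for some $m$; $\mathrm{pack}(w)$ replaces each occurrence of the $t$-th smallest letter of $w$ by $t$. For a packed word $w=w_1\cdots w_n$: $\mathrm{DC}(w)$ is the composition of $n$ with descent set $\{i:w_i>w_{i+1}\}$; $\mathrm{WC}(w)$ is the composition of $n$ whose descent set is the set of positions $p<n$ such that the letter $w_p$ does not occur in $w_{p+1}\cdots w_n$; $\mathrm{sinv}(w)$ is the number of pairs $i<j$ with $w_i>w_j$ and $w_j$ not occurring in $w_{j+1}\cdots w_n$. $\mathbf{WQSym}$ is the vector space with basis $(\mathbf M_u)$ indexed by packed words, with product $\mathbf M_{u'}\mathbf M_{u''}=\sum\mathbf M_u$ over packed words $u=v\cdot w$ (concatenation) with $\mathrm{pack}(v)=u'$, $\mathrm{pack}(w)=u''$. The (associative) product $\star_q$ is the bilinear product with $\mathbf M_{u'}\star_q\mathbf M_{u''}=\sum q^{\mathrm{sinv}(u)-\mathrm{sinv}(u')-\mathrm{sinv}(u'')}\mathbf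 M_u$ over the same $u$. Let $\mathbf{Sym}$ be the quotient of $\mathbf{WQSym}$ by the span of all $\mathbf M_u-\mathbf M_v$ with $\mathrm{WC}(u)=\mathrm{WC}(v)$, $\zeta$ the quotient map, and $\Psi_I=\zeta(\mathbf M_u)$ for any $u$ with $\mathrm{WC}(u)=I$; $(\Psi_I)$ is a basis (this realizes noncommutative symmetric functions with Tevlin's monomial basis). Let $\tilde S_m=\sum\mathbf M_u$ over nondecreasing packed words $u$ of length $m$, and $S^{J}(q)=\zeta(\tilde S_{j_1}\star_q\cdots\star_q\tilde S_{j_l})$ for $J=(j_1,\dots,j_l)$. Let $L_J(q)=\sum_{I\preceq J}q^{\mathrm{st}(I,J)}\Psi_I$ (a basis). $e_I(q)$ denotes the coefficient of $L_I(q)$ in the expansion of $S^{(1^n)}(q)$, $(1^n)=(1,\dots,1)$. *)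

theory Defs
  imports Main
begin

definition is_comp :: "nat list \<Rightarrow> bool" where
  "is_comp I \<longleftrightarrow> (\<forall>x\<in>set I. 0 < x)"

definition comps :: "nat \<Rightarrow> nat list set" where
  "comps n = {I. is_comp I \<and> sum_list I = n}"

definition des_set :: "nat list \<Rightarrow> nat set" where
  "des_set I = {sum_list (take j I) | j. 1 \<le> j \<and> j < length I}"

definition finer :: "nat list \<Rightarrow> nat list \<Rightarrow> bool" where
  "finer I J \<longleftrightarrow> des_set J \<subseteq> des_set I"

definition st' :: "nat list \<Rightarrow> nat list \<Rightarrow> nat" where
  "st' I J = card {(a, b). a \<in> des_set I \<and> b \<in> des_set J \<and> a \<le> b}"

definition st :: "nat list \<Rightarrow> nat list \<Rightarrow> nat" where
  "st I J = card {(a, b). a \<in> des_set I \<and> b \<in> des_set J \<and> a \<ge> b}"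

fun diffs :: "nat \<Rightarrow> nat list \<Rightarrow> nat list" where
  "diffs p [] = []"
| "diffs p (x # xs) = (x - p) # diffs x xs"

definition comp_of_des :: "nat \<Rightarrow> nat set \<Rightarrow> nat list" where
  "comp_of_des n D = diffs 0 (sorted_list_of_set ((D \<inter> {1..<n}) \<union> {n}))"

definition qint :: "'a::field \<Rightarrow> nat \<Rightarrow> 'a" where
  "qint q m = (\<Sum>i<m. q ^ i)"

definition QFactA :: "'a::field \<Rightarrow> nat list \<Rightarrow> 'a" where
  "QFactA q J = (\<Prod>t<length J. qint q (length J - t) ^ (J ! t))"

text \<open>French convention: box (c, r) = column c (0-based, from the left),
  row r (0-based, from the bottom).\<close>
definition col_lengths :: "nat list \<Rightarrow> nat list" where
  "col_lengths I = concat (map (\<lambda>t. replicate (I ! t - 1) (length I - t)) [0..<length I])"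

definition shape :: "nat list \<Rightarrow> (nat \<times> nat) set" where
  "shape I = {(c, r). c < length (col_lengths I) \<and> r < col_lengths I ! c}"

text \<open>A filling is given by the set T of boxes containing 1.\<close>
definition perm_tableau :: "nat list \<Rightarrow> (nat \<times> nat) set \<Rightarrow> bool" where
  "perm_tableau I T \<longleftrightarrow>
     T \<subseteq> shape I \<and>
     (\<forall>c < length (col_lengths I). \<exists>r. (c, r) \<in> T) \<and>
     (\<forall>c r. (c, r) \<in> shape I \<and> (c, r) \<notin> T \<longrightarrow>
        \<not> ((\<exists>r' < r. (c, r') \<in> T) \<and> (\<exists>c' < c. (c', r) \<in> T)))"

definition tab_rank :: "nat list \<Rightarrow> (nat \<times> nat) set \<Rightarrow> nat" where
  "tab_rank I T = card T - length (col_lengths I)"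

definition PTA :: "'a::field \<Rightarrow> nat list \<Rightarrow> 'a" where
  "PTA q I = (\<Sum>T \<in> {T. perm_tableau I T}. q ^ tab_rank I T)"

definition packed :: "nat list \<Rightarrow> bool" where
  "packed u \<longleftrightarrow> set u = {1..card (set u)}"

definition pack :: "nat list \<Rightarrow> nat list" where
  "pack w = map (\<lambda>x. card {y \<in> set w. y \<le> x}) w"

definition wdes :: "nat list \<Rightarrow> nat set" where
  "wdes u = {p. 1 \<le> p \<and> p < length u \<and> u ! (p - 1) \<notin> set (drop p u)}"

definition WC :: "nat list \<Rightarrow> nat list" where
  "WC u = comp_of_des (length u) (wdes u)"

definition sinv :: "nat list \<Rightarrow> nat" where
  "sinv u = card {(i, j). i < j \<and> j < length u \<and> u ! i > u ! j \<and> u ! j \<notin> set (drop (Suc j) u)}"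

text \<open>Elements of WQSym (over the field) are represented by their coefficient
  functions on packed words: f u is the coefficient of M_u (values at
  non-packed words are irrelevant).\<close>
type_synonym 'a wqsym = "nat list \<Rightarrow> 'a"

text \<open>Bilinear extension of M_{u'} *_q M_{u''} = sum q^(sinv u - sinv u' - sinv u'') M_u.\<close>
definition star_q :: "'a::field \<Rightarrow> 'a wqsym \<Rightarrow> 'a wqsym \<Rightarrow> 'a wqsym" where
  "star_q q f g = (\<lambda>u. if packed u then
      (\<Sum>k\<le>length u. f (pack (take k u)) * g (pack (drop k u)) *
         q powi (int (sinv u) - int (sinv (pack (take k u))) - int (sinv (pack (drop k u)))))
    else 0)"

definition unitM :: "'a::field wqsym" where
  "unitM = (\<lambda>u. if u = [] then 1 else 0)"

definition tildeS :: "nat \<Rightarrow> 'a::field wqsym" where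
  "tildeS m = (\<lambda>u. if packed u \<and> length u = m \<and> sorted u then 1 else 0)"

definition star_list :: "'a::field \<Rightarrow> 'a wqsym list \<Rightarrow> 'a wqsym" where
  "star_list q fs = foldr (star_q q) fs unitM"

text \<open>zeta f, given by its coefficients on Psi_I: sum of the coefficients of all
  M_u with WC(u) = I.\<close>
definition zeta :: "'a::field wqsym \<Rightarrow> nat list \<Rightarrow> 'a" where
  "zeta f I = (\<Sum>u \<in> {u. packed u \<and> length u = sum_list I \<and> WC u = I}. f u)"

definition SJ :: "'a::field \<Rightarrow> nat list \<Rightarrow> nat list \<Rightarrow> 'a" where
  "SJ q J = zeta (star_list q (map tildeS J))"

text \<open>Coefficient of Psi_I in L_J(q) = sum_{I \<preceq> J} q^st(I,J) Psi_I.\<close>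
definition Lcoef :: "'a::field \<Rightarrow> nat list \<Rightarrow> nat list \<Rightarrow> 'a" where
  "Lcoef q J I = (if is_comp I \<and> sum_list I = sum_list J \<and> finer I J then q ^ st I J else 0)"

text \<open>e_I(q): coefficient of L_I(q) in the expansion of S^(1^n)(q), n = |I|.\<close>
definition eA :: "'a::field \<Rightarrow> nat list \<Rightarrow> 'a" where
  "eA q I = (let n = sum_list I in
     (THE c. (\<forall>J. J \<notin> comps n \<longrightarrow> c J = 0) \<and>
             (\<forall>K \<in> comps n. (\<Sum>J \<in> comps n. c J * Lcoef q J K) = SJ q (replicate n 1) K)) I)"

definition RHS :: "'a::field \<Rightarrow> nat list \<Rightarrow> 'a" where
  "RHS q I = (\<Sum>J \<in> {J \<in> comps (sum_list I). finer I J}.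
      (- 1 / q) ^ (length I - length J) * (1 / q) ^ st' I J * QFactA q J)"

end

theory Submission
  imports Defs
begin

text \<open>
  By definition, e_I(q) is the unique solution c of the linear system
  sum_J c_J [Psi_K] L_J(q) = [Psi_K] S^(1^n)(q), which is triangular for refinement with powers
  of q on the diagonal.  Splitting off the first letter of a packed word shows that
  [Psi_K] S^(1^n)(q), the sum of q^sinv(u) over the packed words u with WC(u) = K, equals
  QFact_A(K).  It therefore suffices to show that both PT^A and the alternating sum solve
  the system.

  For the alternating sum this is a matrix inversion: its coefficients form an explicit
  inverse of the matrix of the L_J(q), checked by induction on n, since every composition of
  n + 1 is obtained from one of n by prepending a part 1 or by enlarging the first part.

  For permutation tableaux the same induction applies: prepending a part 1 adds a row with
  no boxes, and enlarging the first part adds a first column of full height.  To control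
  the latter, tableaux are counted with an extra weight [b + 1]_q for every row that could
  still receive a 1 in a new first column.  Adding such a column then acts as a finite
  difference in b, and the resulting recursion is solved by QFact_A(K) times a q-binomial
  coefficient in l(K) and b, which equals 1 at b = 0.
\<close>

section \<open>Compositions and their descent sets\<close>

lemma is_comp_Nil [simp]: "is_comp []"
  by (simp add: is_comp_def)

lemma is_comp_Cons [simp]: "is_comp (a # J) \<longleftrightarrow> 0 < a \<and> is_comp J"
  by (auto simp: is_comp_def)

lemma comps_is_comp: "J \<in> comps n \<Longrightarrow> is_comp J"
  and comps_sum_list: "J \<in> comps n \<Longrightarrow> sum_list J = n"
  and comps_nonempty: "J \<in> comps n \<Longrightarrow> 0 < n \<Longrightarrow> J \<noteq> []"
  by (auto simp: comps_def)

lemma finite_comps [simp]: "finite (comps n)"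
proof -
  have "comps n \<subseteq> {J. set J \<subseteq> {0..n} \<and> length J \<le> n}"
  proof clarify
    fix J assume "J \<in> comps n"
    then have pos: "\<forall>x\<in>set J. 0 < x" and sum: "sum_list J = n"
      by (auto simp: comps_def is_comp_def)
    from pos have "length J \<le> sum_list J"
      by (induction J) auto
    with sum show "set J \<subseteq> {0..n} \<and> length J \<le> n"
      by (auto dest: member_le_sum_list)
  qed
  then show ?thesis
    by (rule finite_subset) (rule finite_lists_length_le, simp)
qed

lemma comps_Suc_0: "comps (Suc 0) = {[Suc 0]}"
proof (intro set_eqI iffI)
  fix K assume "K \<in> comps (Suc 0)"
  then obtain a J where "K = a # J" "0 < a" "a + sum_list J = 1" "is_comp J"
    by (cases K) (auto simp: comps_def)
  then show "K \<in> {[Suc 0]}"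
    by (cases J) auto
qed (simp add: comps_def)

lemma des_set_Nil [simp]: "des_set [] = {}"
  and des_set_singleton [simp]: "des_set [a] = {}"
  by (auto simp: des_set_def)

lemma des_set_Cons: "J \<noteq> [] \<Longrightarrow> des_set (a # J) = insert a ((+) a ` des_set J)"
proof (intro set_eqI iffI)
  fix x assume "x \<in> des_set (a # J)"
  then obtain j where "x = a + sum_list (take j J)" "j < length J"
    by (auto simp: des_set_def Suc_le_eq gr0_conv_Suc)
  then show "x \<in> insert a ((+) a ` des_set J)"
    by (cases "j = 0") (auto simp: des_set_def Suc_le_eq)
next
  fix x assume "J \<noteq> []" "x \<in> insert a ((+) a ` des_set J)"
  then consider "x = a" "J \<noteq> []"
    | j where "x = a + sum_list (take j J)" "1 \<le> j" "j < length J"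
    by (auto simp: des_set_def)
  then show "x \<in> des_set (a # J)"
  proof cases
    case 1
    then show ?thesis
      unfolding des_set_def by (intro CollectI exI[of _ 1]) auto
  next
    case (2 j)
    then show ?thesis
      unfolding des_set_def by (intro CollectI exI[of _ "Suc j"]) auto
  qed
qed

lemma finite_des_set [simp]: "finite (des_set J)"
  unfolding des_set_def
  by (rule finite_subset[of _ "(\<lambda>j. sum_list (take j J)) ` {..<length J}"]) auto

lemma des_set_pos: "is_comp J \<Longrightarrow> x \<in> des_set J \<Longrightarrow> 0 < x"
  by (cases J) (auto simp: des_set_def is_comp_def Suc_le_eq take_Cons')

lemma des_set_less_sum_list: "is_comp J \<Longrightarrow> x \<in> des_set J \<Longrightarrow> x < sum_list J"
proof (clarsimp simp: des_set_def is_comp_def)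
  fix j assume pos: "\<forall>x\<in>set J. 0 < x" and j: "j < length J"
  have "sum_list J = sum_list (take j J) + sum_list (drop j J)"
    by (metis append_take_drop_id sum_list_append)
  moreover have "0 < J ! j" and "J ! j \<le> sum_list (drop j J)"
    using pos j elem_le_sum_list[of 0 "drop j J"] by simp_all
  ultimately show "sum_list (take j J) < sum_list J"
    by simp
qed

lemma length_eq_Suc_card_des_set:
  "is_comp J \<Longrightarrow> J \<noteq> [] \<Longrightarrow> length J = Suc (card (des_set J))"
proof (induction J)
  case (Cons a J)
  have "a \<notin> (+) a ` des_set J"
    using des_set_pos[of J] Cons.prems by fastforce
  with Cons show ?case
    by (cases "J = []") (simp_all add: des_set_Cons card_image)
qed simp

fun inc_hd :: "nat list \<Rightarrow> nat list" where
  "inc_hd [] = []"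
| "inc_hd (a # J) = Suc a # J"

lemma length_inc_hd [simp]: "length (inc_hd J) = length J"
  by (cases J) auto

lemma is_comp_inc_hd: "is_comp J \<Longrightarrow> is_comp (inc_hd J)"
  by (cases J) auto

lemma sum_list_inc_hd: "J \<noteq> [] \<Longrightarrow> sum_list (inc_hd J) = Suc (sum_list J)"
  by (cases J) auto

lemma inc_hd_inj: "inc_hd K = inc_hd J \<Longrightarrow> K \<noteq> [] \<Longrightarrow> J \<noteq> [] \<Longrightarrow> K = J"
  by (cases K; cases J) auto

lemma inc_hd_neq_Cons_1: "K \<in> comps n \<Longrightarrow> 0 < n \<Longrightarrow> inc_hd K \<noteq> 1 # J"
  by (cases K) (auto simp: comps_def)

lemma comps_Suc:
  assumes "0 < n"
  shows "comps (Suc n) = (Cons 1) ` comps n \<union> inc_hd ` comps n"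
proof (intro set_eqI iffI)
  fix K assume K: "K \<in> comps (Suc n)"
  then obtain a J where K_eq: "K = a # J" "0 < a"
    by (cases K) (auto simp: comps_def)
  show "K \<in> (Cons 1) ` comps n \<union> inc_hd ` comps n"
  proof (cases "a = 1")
    case True
    with K K_eq show ?thesis by (auto simp: comps_def)
  next
    case False
    with K_eq obtain b where "a = Suc b" "0 < b"
      by (cases a) auto
    with K K_eq have "K = inc_hd (b # J)" "b # J \<in> comps n"
      by (auto simp: comps_def)
    then show ?thesis by blast
  qed
next
  fix K assume "K \<in> (Cons 1) ` comps n \<union> inc_hd ` comps n"
  then consider J where "J \<in> comps n" "K = 1 # J" | J where "J \<in> comps n" "K = inc_hd J"
    by blast
  then show "K \<in> comps (Suc n)"
  proof cases
    case (2 J)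
    with assms show ?thesis
      by (cases J) (auto simp: comps_def)
  qed (auto simp: comps_def)
qed

lemma comps_SucE:
  assumes "K \<in> comps (Suc n)" "0 < n"
  obtains K0 where "K0 \<in> comps n" "K = 1 # K0"
    | K0 where "K0 \<in> comps n" "K = inc_hd K0"
  using assms comps_Suc by blast

lemma sum_comps_Suc:
  assumes "0 < n"
  shows "(\<Sum>K\<in>comps (Suc n). f K) = (\<Sum>J\<in>comps n. f (1 # J) + f (inc_hd J))"
proof -
  have "inj_on inc_hd (comps n)"
    using assms by (auto intro: inj_onI inc_hd_inj dest: comps_nonempty)
  moreover have "(Cons 1) ` comps n \<inter> inc_hd ` comps n = {}"
    using inc_hd_neq_Cons_1[OF _ assms] by (auto simp: image_iff) metis
  ultimately show ?thesis
    unfolding comps_Suc[OF assms]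
    by (simp add: sum.union_disjoint sum.reindex sum.distrib)
qed

lemma des_set_Cons_1: "J \<noteq> [] \<Longrightarrow> des_set (1 # J) = insert 1 (Suc ` des_set J)"
  by (simp add: des_set_Cons)

lemma des_set_inc_hd: "J \<noteq> [] \<Longrightarrow> des_set (inc_hd J) = Suc ` des_set J"
  by (cases J; cases "tl J") (auto simp: des_set_Cons image_image)

lemma des_set_Cons_eq_empty_iff: "des_set (a # J) = {} \<longleftrightarrow> J = []"
  by (cases J) (auto simp: des_set_Cons)

lemma des_set_ge_hd: "is_comp (a # J) \<Longrightarrow> x \<in> des_set (a # J) \<Longrightarrow> a \<le> x"
  by (cases "J = []") (auto simp: des_set_Cons)

lemma des_set_inj:
  "is_comp J \<Longrightarrow> is_comp K \<Longrightarrow> sum_list J = sum_list K \<Longrightarrow> des_set J = des_set K \<Longrightarrow> J = K"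
proof (induction J arbitrary: K)
  case Nil
  then show ?case by (cases K) auto
next
  case (Cons a J K)
  then obtain b K' where K: "K = b # K'"
    by (cases K) auto
  show ?case
  proof (cases "J = [] \<or> K' = []")
    case True
    with Cons.prems K have "J = []" "K' = []"
      by (metis des_set_Cons_eq_empty_iff)+
    with Cons.prems K show ?thesis
      by simp
  next
    case False
    then have des: "insert a ((+) a ` des_set J) = insert b ((+) b ` des_set K')"
      using Cons.prems(4) K by (simp add: des_set_Cons)
    have "a = b"
      using des_set_ge_hd[of a J] des_set_ge_hd[of b K'] Cons.prems K False
      by (metis des_set_Cons insertI1 le_antisym)
    moreover have "a \<notin> (+) a ` des_set J" "a \<notin> (+) a ` des_set K'"
      using des_set_pos[of J] des_set_pos[of K'] Cons.prems K by fastforce+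
    ultimately have "des_set J = des_set K'"
      using des by (metis insert_ident inj_image_eq_iff inj_on_add)
    with Cons K \<open>a = b\<close> show ?thesis
      by simp
  qed
qed

lemma des_set_diffs:
  assumes "sorted_wrt (<) xs" "\<forall>x\<in>set xs. p < x"
  shows "des_set (diffs p xs) = (\<lambda>x. x - p) ` set (butlast xs) \<and> is_comp (diffs p xs)
    \<and> (xs \<noteq> [] \<longrightarrow> sum_list (diffs p xs) = last xs - p)"
  using assms
proof (induction xs arbitrary: p)
  case (Cons x xs p)
  show ?case
  proof (cases "xs = []")
    case False
    have gt: "\<forall>y\<in>set xs. x < y"
      using Cons.prems by simp
    with Cons.IH Cons.prems have IH: "des_set (diffs x xs) = (\<lambda>y. y - x) ` set (butlast xs)"
      "is_comp (diffs x xs)" "sum_list (diffs x xs) = last xs - x"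
      using False by auto
    have "diffs x xs \<noteq> []"
      using False by (cases xs) auto
    then have "des_set (diffs p (x # xs))
        = insert (x - p) ((+) (x - p) ` (\<lambda>y. y - x) ` set (butlast xs))"
      using IH by (simp add: des_set_Cons)
    also have "(+) (x - p) ` (\<lambda>y. y - x) ` set (butlast xs) = (\<lambda>y. y - p) ` set (butlast xs)"
    proof -
      have "x - p + (y - x) = y - p" if "y \<in> set (butlast xs)" for y
        using that gt Cons.prems(2) by (fastforce dest: in_set_butlastD)
      then show ?thesis
        unfolding image_image by (intro image_cong) auto
    qed
    finally have "des_set (diffs p (x # xs)) = (\<lambda>y. y - p) ` set (butlast (x # xs))"
      using False by simp
    moreover have "x < last xs"
      using gt False by simp
    ultimately show ?thesis
      using IH False Cons.prems(2) by simp
  qed (use Cons.prems in simp)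
qed simp

lemma comp_of_des:
  assumes "0 < n"
  shows "comp_of_des n D \<in> comps n" "des_set (comp_of_des n D) = D \<inter> {1..<n}"
proof -
  define D' where "D' = D \<inter> {1..<n}"
  define ys where "ys = sorted_list_of_set D' @ [n]"
  have sorted: "sorted_wrt (<) ys"
    unfolding ys_def sorted_wrt_append by (auto simp: D'_def)
  have set_ys: "set ys = D' \<union> {n}"
    by (simp add: ys_def D'_def)
  have "length ys = card (D' \<union> {n})"
    using sorted set_ys by (metis distinct_card strict_sorted_iff)
  then have "sorted_list_of_set (D' \<union> {n}) = ys"
    using sorted_list_of_set_unique[of "D' \<union> {n}" ys] sorted set_ys by (simp add: D'_def)
  then have "comp_of_des n D = diffs 0 ys"
    by (simp add: comp_of_des_def D'_def)
  moreover have "\<forall>x\<in>set ys. 0 < x"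
    using assms set_ys by (auto simp: D'_def)
  moreover have "set (butlast ys) = D'" "last ys = n" "ys \<noteq> []"
    by (simp_all add: ys_def D'_def)
  ultimately show "comp_of_des n D \<in> comps n" "des_set (comp_of_des n D) = D \<inter> {1..<n}"
    using des_set_diffs[OF sorted] by (simp_all add: comps_def D'_def)
qed

lemma comp_of_des_des_set:
  assumes "K \<in> comps n" "0 < n"
  shows "comp_of_des n (des_set K) = K"
proof -
  have "des_set K \<subseteq> {1..<n}"
    using assms des_set_pos des_set_less_sum_list by (fastforce simp: comps_def)
  then show ?thesis
    using des_set_inj comp_of_des[OF assms(2), of "des_set K"] assms(1)
    by (auto simp: comps_def Int_absorb2)
qed

section \<open>The statistics \<open>st\<close> and \<open>st'\<close>\<close>

definition pairs_ge :: "nat set \<Rightarrow> nat set \<Rightarrow> nat" where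
  "pairs_ge A B = card {(a, b). a \<in> A \<and> b \<in> B \<and> a \<ge> b}"

definition pairs_le :: "nat set \<Rightarrow> nat set \<Rightarrow> nat" where
  "pairs_le A B = card {(a, b). a \<in> A \<and> b \<in> B \<and> a \<le> b}"

lemma st_eq_pairs_ge: "st I J = pairs_ge (des_set I) (des_set J)"
  by (simp add: st_def pairs_ge_def)

lemma st'_eq_pairs_le: "st' I J = pairs_le (des_set I) (des_set J)"
  by (simp add: st'_def pairs_le_def)

lemma card_pairs_Suc_Suc:
  "card {(a, b). a \<in> Suc ` A \<and> b \<in> Suc ` B \<and> R a b}
    = card {(a, b). a \<in> A \<and> b \<in> B \<and> R (Suc a) (Suc b)}"
proof -
  have "{(a, b). a \<in> Suc ` A \<and> b \<in> Suc ` B \<and> R a b}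
      = map_prod Suc Suc ` {(a, b). a \<in> A \<and> b \<in> B \<and> R (Suc a) (Suc b)}"
    by auto
  then show ?thesis
    by (simp add: card_image inj_on_def)
qed

lemma finite_pairs: "finite A \<Longrightarrow> finite B \<Longrightarrow> finite {(a, b). a \<in> A \<and> b \<in> B \<and> P a b}"
  by (rule finite_subset[of _ "A \<times> B"]) auto

lemma pairs_ge_Suc_Suc: "pairs_ge (Suc ` A) (Suc ` B) = pairs_ge A B"
  and pairs_le_Suc_Suc: "pairs_le (Suc ` A) (Suc ` B) = pairs_le A B"
  by (simp_all add: pairs_ge_def pairs_le_def card_pairs_Suc_Suc)

context
  fixes A B :: "nat set"
  assumes fin: "finite A" "finite B" and pos: "0 \<notin> A" "0 \<notin> B"
begin

lemma pairs_ge_insert_1_Suc: "pairs_ge (insert 1 (Suc ` A)) (Suc ` B) = pairs_ge A B"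
proof -
  have "{(a, b). a \<in> insert 1 (Suc ` A) \<and> b \<in> Suc ` B \<and> a \<ge> b}
      = {(a, b). a \<in> Suc ` A \<and> b \<in> Suc ` B \<and> a \<ge> b}"
    using pos by (auto simp: Suc_le_eq gr0_conv_Suc)
  then show ?thesis
    using pairs_ge_Suc_Suc by (simp add: pairs_ge_def)
qed

lemma pairs_ge_insert_1_insert_1:
  "pairs_ge (insert 1 (Suc ` A)) (insert 1 (Suc ` B)) = pairs_ge A B + Suc (card A)"
proof -
  let ?X = "{(a, b). a \<in> insert 1 (Suc ` A) \<and> b \<in> insert 1 (Suc ` B) \<and> a \<ge> b}"
  let ?Y = "{(a, b). a \<in> Suc ` A \<and> b \<in> Suc ` B \<and> a \<ge> b}"
  let ?Z = "(\<lambda>a. (a, 1::nat)) ` insert 1 (Suc ` A)"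
  have "?X = ?Y \<union> ?Z" "?Y \<inter> ?Z = {}"
    using pos by auto
  moreover have "finite ?Y" "finite ?Z"
    using fin by (auto intro: finite_pairs)
  ultimately have "card ?X = card ?Y + card ?Z"
    by (simp only: card_Un_disjoint)
  moreover have "card ?Z = Suc (card A)"
  proof -
    have "1 \<notin> Suc ` A"
      using pos by auto
    then show ?thesis
      using fin by (subst card_image) (auto simp: inj_on_def card_image)
  qed
  ultimately show ?thesis
    using pairs_ge_Suc_Suc by (simp add: pairs_ge_def)
qed

lemma pairs_le_insert_1_Suc: "pairs_le (insert 1 (Suc ` A)) (Suc ` B) = pairs_le A B + card B"
proof -
  let ?Y = "{(a, b). a \<in> Suc ` A \<and> b \<in> Suc ` B \<and> a \<le> b}"
  let ?Z = "(\<lambda>b. (1::nat, b)) ` Suc ` B"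
  have "{(a, b). a \<in> insert 1 (Suc ` A) \<and> b \<in> Suc ` B \<and> a \<le> b} = ?Y \<union> ?Z"
    and "?Y \<inter> ?Z = {}"
    using pos by auto
  moreover have "card ?Z = card B"
    by (subst card_image) (auto simp: inj_on_def card_image)
  ultimately show ?thesis
    using fin pairs_le_Suc_Suc
    by (simp add: pairs_le_def card_Un_disjoint finite_pairs)
qed

lemma pairs_le_insert_1_insert_1:
  "pairs_le (insert 1 (Suc ` A)) (insert 1 (Suc ` B)) = pairs_le A B + Suc (card B)"
proof -
  let ?Y = "{(a, b). a \<in> insert 1 (Suc ` A) \<and> b \<in> Suc ` B \<and> a \<le> b}"
  have "{(a, b). a \<in> insert 1 (Suc ` A) \<and> b \<in> insert 1 (Suc ` B) \<and> a \<le> b} = insert (1, 1) ?Y"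
    and "(1, 1) \<notin> ?Y"
    using pos by auto
  moreover have "finite ?Y"
    using fin by (intro finite_pairs) auto
  ultimately show ?thesis
    using pairs_le_insert_1_Suc by (simp add: pairs_le_def)
qed

end

lemma zero_notin_des_set: "is_comp J \<Longrightarrow> 0 \<notin> des_set J"
  using des_set_pos by blast

context
  fixes K J :: "nat list"
  assumes comp: "is_comp K" "is_comp J" and nonempty: "K \<noteq> []" "J \<noteq> []"
begin

lemma st_Cons_1_Cons_1: "st (1 # K) (1 # J) = st K J + length K"
  unfolding st_eq_pairs_ge des_set_Cons_1[OF nonempty(1)] des_set_Cons_1[OF nonempty(2)]
  using pairs_ge_insert_1_insert_1[OF finite_des_set finite_des_set
      zero_notin_des_set[OF comp(1)] zero_notin_des_set[OF comp(2)]]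
    length_eq_Suc_card_des_set[OF comp(1) nonempty(1)]
  by simp

lemma st_Cons_1_inc_hd: "st (1 # K) (inc_hd J) = st K J"
  unfolding st_eq_pairs_ge des_set_Cons_1[OF nonempty(1)] des_set_inc_hd[OF nonempty(2)]
  using pairs_ge_insert_1_Suc[OF finite_des_set finite_des_set
      zero_notin_des_set[OF comp(1)] zero_notin_des_set[OF comp(2)]]
  by simp

lemma st_inc_hd_inc_hd: "st (inc_hd K) (inc_hd J) = st K J"
  by (simp add: st_eq_pairs_ge des_set_inc_hd nonempty pairs_ge_Suc_Suc)

lemma st'_Cons_1_Cons_1: "st' (1 # K) (1 # J) = st' K J + length J"
  unfolding st'_eq_pairs_le des_set_Cons_1[OF nonempty(1)] des_set_Cons_1[OF nonempty(2)]
  using pairs_le_insert_1_insert_1[OF finite_des_set finite_des_set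
      zero_notin_des_set[OF comp(1)] zero_notin_des_set[OF comp(2)]]
    length_eq_Suc_card_des_set[OF comp(2) nonempty(2)]
  by simp

lemma st'_Cons_1_inc_hd: "Suc (st' (1 # K) (inc_hd J)) = st' K J + length J"
  unfolding st'_eq_pairs_le des_set_Cons_1[OF nonempty(1)] des_set_inc_hd[OF nonempty(2)]
  using pairs_le_insert_1_Suc[OF finite_des_set finite_des_set
      zero_notin_des_set[OF comp(1)] zero_notin_des_set[OF comp(2)]]
    length_eq_Suc_card_des_set[OF comp(2) nonempty(2)]
  by simp

lemma st'_inc_hd_inc_hd: "st' (inc_hd K) (inc_hd J) = st' K J"
  by (simp add: st'_eq_pairs_le des_set_inc_hd nonempty pairs_le_Suc_Suc)

lemma finer_Cons_1_Cons_1: "finer (1 # K) (1 # J) \<longleftrightarrow> finer K J"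
  and finer_Cons_1_inc_hd: "finer (1 # K) (inc_hd J) \<longleftrightarrow> finer K J"
  and not_finer_inc_hd_Cons_1: "\<not> finer (inc_hd K) (1 # J)"
  and finer_inc_hd_inc_hd: "finer (inc_hd K) (inc_hd J) \<longleftrightarrow> finer K J"
  unfolding finer_def des_set_Cons_1[OF nonempty(1)] des_set_Cons_1[OF nonempty(2)]
    des_set_inc_hd[OF nonempty(1)] des_set_inc_hd[OF nonempty(2)]
  using zero_notin_des_set[OF comp(1)] zero_notin_des_set[OF comp(2)]
  by auto

lemma finer_length_le: "finer K J \<Longrightarrow> length J \<le> length K"
  using length_eq_Suc_card_des_set comp nonempty
  by (simp add: finer_def card_mono)

end

lemma finer_length_less:
  assumes "J \<in> comps n" "K \<in> comps n" "0 < n" "finer K J" "J \<noteq> K"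
  shows "length J < length K"
proof -
  have "des_set J \<noteq> des_set K"
    using assms des_set_inj by (auto simp: comps_def)
  with assms(4) have "card (des_set J) < card (des_set K)"
    by (simp add: finer_def psubset_card_mono)
  with assms show ?thesis
    by (simp add: length_eq_Suc_card_des_set comps_is_comp comps_nonempty)
qed

section \<open>\<open>q\<close>-integers and \<open>q\<close>-binomial coefficients\<close>

lemma qint_0 [simp]: "qint q 0 = 0"
  and qint_1 [simp]: "qint q (Suc 0) = 1"
  and qint_Suc: "qint q (Suc m) = qint q m + q ^ m"
  by (simp_all add: qint_def)

lemma qint_add: "qint q (a + b) = qint q a + q ^ a * qint q b"
  by (induction b) (simp_all add: qint_Suc algebra_simps power_add)

lemma qint_Suc': "qint q (Suc m) = 1 + q * qint q m"
  using qint_add[of q 1 m] by simp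

lemma sum_power_atLeastAtMost_eq_qint: "(\<Sum>a\<in>{1..m}. q ^ (a - 1)) = qint q m"
  by (induction m) (simp_all add: qint_Suc)

lemma QFactA_Cons_1: "QFactA q (1 # J) = qint q (Suc (length J)) * QFactA q J"
  unfolding QFactA_def length_Cons prod.lessThan_Suc_shift by simp

lemma QFactA_inc_hd: "J \<noteq> [] \<Longrightarrow> QFactA q (inc_hd J) = qint q (length J) * QFactA q J"
  by (cases J)
    (simp_all only: QFactA_def inc_hd.simps length_Cons prod.lessThan_Suc_shift, simp_all)

lemma QFactA_singleton: "QFactA q [a] = 1"
  by (simp add: QFactA_def)

text \<open>\<open>qbinom q a b\<close> is the \<open>q\<close>-binomial coefficient \<open>[a + b]! / ([a]! [b]!)\<close>.\<close>

fun qbinom :: "'a::field \<Rightarrow> nat \<Rightarrow> nat \<Rightarrow> 'a" where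
  "qbinom q 0 b = 1"
| "qbinom q (Suc a) 0 = 1"
| "qbinom q (Suc a) (Suc b) = qbinom q a (Suc b) + q ^ Suc a * qbinom q (Suc a) b"

lemma qbinom_0_right [simp]: "qbinom q a 0 = 1"
  by (cases a) auto

lemma qbinom_1_left: "qbinom q (Suc 0) b = qint q (Suc b)"
  by (induction b) (simp_all add: qint_Suc')

lemma qbinom_1_right: "qbinom q a (Suc 0) = qint q (Suc a)"
  by (induction a) (simp_all add: qint_Suc)

lemma qbinom_qint:
  "qint q (Suc a) * qbinom q (Suc a) b = qint q (Suc (a + b)) * qbinom q a b
   \<and> qint q (Suc b) * qbinom q a (Suc b) = qint q (Suc (a + b)) * qbinom q a b"
proof (induction q a b rule: qbinom.induct)
  case (1 q b)
  then show ?case by (simp add: qbinom_1_left)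
next
  case (2 q a)
  then show ?case by (simp add: qbinom_1_right)
next
  case (3 q a b)
  have swap_X: "qint q (Suc (Suc a)) * qbinom q (Suc (Suc a)) b
      = qint q (Suc b) * qbinom q (Suc a) (Suc b)"
    using "3.IH"(2) by simp
  have swap_Y: "qint q (Suc (Suc b)) * qbinom q a (Suc (Suc b))
      = qint q (Suc a) * qbinom q (Suc a) (Suc b)"
    using "3.IH"(1) by simp
  have "qint q (Suc (Suc a)) * qbinom q (Suc (Suc a)) (Suc b)
      = qint q (Suc (Suc a)) * qbinom q (Suc a) (Suc b)
        + q ^ Suc (Suc a) * (qint q (Suc (Suc a)) * qbinom q (Suc (Suc a)) b)"
    by (simp add: algebra_simps)
  also have "\<dots>
      = (qint q (Suc (Suc a)) + q ^ Suc (Suc a) * qint q (Suc b)) * qbinom q (Suc a) (Suc b)"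
    unfolding swap_X by (simp add: algebra_simps)
  also have "qint q (Suc (Suc a)) + q ^ Suc (Suc a) * qint q (Suc b) = qint q (Suc (Suc a + Suc b))"
    using qint_add[of q "Suc (Suc a)" "Suc b"] by simp
  finally have X: "qint q (Suc (Suc a)) * qbinom q (Suc (Suc a)) (Suc b)
      = qint q (Suc (Suc a + Suc b)) * qbinom q (Suc a) (Suc b)" .
  have "qint q (Suc (Suc b)) * qbinom q (Suc a) (Suc (Suc b))
      = qint q (Suc (Suc b)) * qbinom q a (Suc (Suc b))
        + q ^ Suc a * (qint q (Suc (Suc b)) * qbinom q (Suc a) (Suc b))"
    by (simp add: algebra_simps)
  also have "\<dots> = (qint q (Suc a) + q ^ Suc a * qint q (Suc (Suc b))) * qbinom q (Suc a) (Suc b)"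
    unfolding swap_Y by (simp add: algebra_simps)
  also have "qint q (Suc a) + q ^ Suc a * qint q (Suc (Suc b)) = qint q (Suc (Suc a + Suc b))"
    using qint_add[of q "Suc a" "Suc (Suc b)"] by simp
  finally have Y: "qint q (Suc (Suc b)) * qbinom q (Suc a) (Suc (Suc b))
      = qint q (Suc (Suc a + Suc b)) * qbinom q (Suc a) (Suc b)" .
  from X Y show ?case
    by simp
qed

section \<open>Permutation tableaux with prescribed column lengths\<close>

definition boxes :: "nat list \<Rightarrow> (nat \<times> nat) set" where
  "boxes L = {(c, r). c < length L \<and> r < L ! c}"

definition is_ptab :: "nat list \<Rightarrow> (nat \<times> nat) set \<Rightarrow> bool" where
  "is_ptab L T \<longleftrightarrow> T \<subseteq> boxes L \<and> (\<forall>c < length L. \<exists>r. (c, r) \<in> T) \<and>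
     (\<forall>c r. (c, r) \<in> boxes L \<and> (c, r) \<notin> T \<longrightarrow>
        \<not> ((\<exists>r' < r. (c, r') \<in> T) \<and> (\<exists>c' < c. (c', r) \<in> T)))"

lemma perm_tableau_eq_is_ptab: "perm_tableau I T = is_ptab (col_lengths I) T"
  by (simp add: perm_tableau_def is_ptab_def shape_def boxes_def)

text \<open>The rows below \<open>k\<close> in which a new leftmost column may carry a \<open>1\<close>.\<close>

definition free_rows :: "nat \<Rightarrow> nat list \<Rightarrow> (nat \<times> nat) set \<Rightarrow> nat set" where
  "free_rows k L T = {r. r < k \<and> \<not> (\<exists>c. (c, r) \<in> boxes L \<and> (c, r) \<notin> T \<and> (\<exists>r' < r. (c, r') \<in> T))}"

definition add_col :: "(nat \<times> nat) set \<Rightarrow> nat set \<Rightarrow> (nat \<times> nat) set" where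
  "add_col T S = Pair 0 ` S \<union> (\<lambda>(c, r). (Suc c, r)) ` T"

definition first_col :: "(nat \<times> nat) set \<Rightarrow> nat set" where
  "first_col T' = {r. (0, r) \<in> T'}"

definition other_cols :: "(nat \<times> nat) set \<Rightarrow> (nat \<times> nat) set" where
  "other_cols T' = {(c, r). (Suc c, r) \<in> T'}"

lemma mem_add_col_0 [simp]: "(0, r) \<in> add_col T S \<longleftrightarrow> r \<in> S"
  and mem_add_col_Suc [simp]: "(Suc c, r) \<in> add_col T S \<longleftrightarrow> (c, r) \<in> T"
  by (auto simp: add_col_def)

lemma first_col_add_col [simp]: "first_col (add_col T S) = S"
  and other_cols_add_col [simp]: "other_cols (add_col T S) = T"
  by (simp_all add: first_col_def other_cols_def)

lemma add_col_first_col_other_cols: "add_col (other_cols T') (first_col T') = T'"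
proof (intro set_eqI)
  fix p :: "nat \<times> nat"
  show "p \<in> add_col (other_cols T') (first_col T') \<longleftrightarrow> p \<in> T'"
    by (cases p; cases "fst p") (auto simp: first_col_def other_cols_def)
qed

lemma card_add_col: "finite T \<Longrightarrow> finite S \<Longrightarrow> card (add_col T S) = card S + card T"
  unfolding add_col_def
  by (subst card_Un_disjoint) (auto simp: card_image inj_on_def split: prod.splits)

lemma mem_boxes_Cons_0 [simp]: "(0, r) \<in> boxes (k # L) \<longleftrightarrow> r < k"
  and mem_boxes_Cons_Suc [simp]: "(Suc c, r) \<in> boxes (k # L) \<longleftrightarrow> (c, r) \<in> boxes L"
  by (simp_all add: boxes_def)

lemma all_nat_split: "(\<forall>c::nat. P c) \<longleftrightarrow> P 0 \<and> (\<forall>c. P (Suc c))"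
  and ex_nat_split: "(\<exists>c::nat. P c) \<longleftrightarrow> P 0 \<or> (\<exists>c. P (Suc c))"
  by (metis not0_implies_Suc)+

lemma add_col_subset_boxes_iff:
  "add_col T S \<subseteq> boxes (k # L) \<longleftrightarrow> S \<subseteq> {..<k} \<and> T \<subseteq> boxes L"
  by (auto simp: add_col_def boxes_def)

lemma add_col_cols_nonempty_iff:
  "(\<forall>c < length (k # L). \<exists>r. (c, r) \<in> add_col T S) \<longleftrightarrow> S \<noteq> {} \<and> (\<forall>c < length L. \<exists>r. (c, r) \<in> T)"
  by (auto simp: All_less_Suc2)

lemma add_col_no_forbidden_zero_iff:
  "(\<forall>c r. (c, r) \<in> boxes (k # L) \<and> (c, r) \<notin> add_col T S \<longrightarrow>
      \<not> ((\<exists>r' < r. (c, r') \<in> add_col T S) \<and> (\<exists>c' < c. (c', r) \<in> add_col T S)))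
   \<longleftrightarrow> (\<forall>c r. (c, r) \<in> boxes L \<and> (c, r) \<notin> T \<longrightarrow>
      \<not> ((\<exists>r' < r. (c, r') \<in> T) \<and> (\<exists>c' < c. (c', r) \<in> T)))
     \<and> (\<forall>r\<in>S. \<not> (\<exists>c. (c, r) \<in> boxes L \<and> (c, r) \<notin> T \<and> (\<exists>r' < r. (c, r') \<in> T)))"
  by (subst all_nat_split) (simp add: Ex_less_Suc2; blast)

lemma subset_free_rows_iff:
  "S \<subseteq> free_rows k L T \<longleftrightarrow>
    S \<subseteq> {..<k} \<and> (\<forall>r\<in>S. \<not> (\<exists>c. (c, r) \<in> boxes L \<and> (c, r) \<notin> T \<and> (\<exists>r' < r. (c, r') \<in> T)))"
  by (auto simp: free_rows_def)

lemma is_ptab_add_col_iff: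
  "is_ptab (k # L) (add_col T S) \<longleftrightarrow> is_ptab L T \<and> S \<subseteq> free_rows k L T \<and> S \<noteq> {}"
  unfolding is_ptab_def add_col_subset_boxes_iff add_col_cols_nonempty_iff
    add_col_no_forbidden_zero_iff subset_free_rows_iff
  by argo

lemma free_rows_add_col:
  "free_rows k (k # L) (add_col T S) = {r \<in> free_rows k L T. r \<in> S \<or> (\<forall>s\<in>S. \<not> s < r)}"
  unfolding free_rows_def
  by (subst ex_nat_split) auto

section \<open>A generating function for permutation tableaux\<close>

definition tab_gf :: "'a::field \<Rightarrow> nat list \<Rightarrow> nat \<Rightarrow> 'a \<Rightarrow> 'a" where
  "tab_gf q L k x = (\<Sum>T\<in>{T. is_ptab L T}. q ^ (card T - length L) * x ^ card (free_rows k L T))"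

lemma finite_boxes [simp]: "finite (boxes L)"
proof (rule finite_subset)
  show "boxes L \<subseteq> {..<length L} \<times> {..<Max (set L)}"
    by (auto simp: boxes_def) (metis Max_ge finite_set nth_mem order.strict_trans2)
qed simp

lemma finite_is_ptab [simp]: "finite {T. is_ptab L T}"
  by (rule finite_subset[of _ "Pow (boxes L)"]) (auto simp: is_ptab_def)

lemma is_ptab_finite: "is_ptab L T \<Longrightarrow> finite T"
  using finite_subset[OF _ finite_boxes] by (auto simp: is_ptab_def)

lemma is_ptab_length_le_card: "is_ptab L T \<Longrightarrow> length L \<le> card T"
proof -
  assume T: "is_ptab L T"
  then have "{..<length L} \<subseteq> fst ` T"
    unfolding is_ptab_def by force
  then have "card {..<length L} \<le> card (fst ` T)"
    using is_ptab_finite[OF T] by (intro card_mono) auto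
  also have "\<dots> \<le> card T"
    using is_ptab_finite[OF T] by (rule card_image_le)
  finally show ?thesis by simp
qed

lemma finite_free_rows [simp]: "finite (free_rows k L T)"
  by (rule finite_subset[of _ "{..<k}"]) (auto simp: free_rows_def)

lemma free_rows_Suc:
  assumes "\<forall>l\<in>set L. l \<le> k"
  shows "free_rows (Suc k) L T = insert k (free_rows k L T)"
proof -
  have "(c, k) \<notin> boxes L" for c
    using assms by (auto simp: boxes_def dest!: nth_mem)
  then show ?thesis
    by (auto simp: free_rows_def less_Suc_eq)
qed

lemma tab_gf_Suc:
  assumes "\<forall>l\<in>set L. l \<le> k"
  shows "tab_gf q L (Suc k) x = x * tab_gf q L k x"
proof -
  have "k \<notin> free_rows k L T" for T
    by (simp add: free_rows_def)
  then show ?thesis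
    unfolding tab_gf_def sum_distrib_left
    by (intro sum.cong) (simp_all add: free_rows_Suc[OF assms])
qed

lemma tab_gf_Nil: "tab_gf q [] k x = x ^ k"
proof -
  have "{T. is_ptab [] T} = {{}}"
    by (auto simp: is_ptab_def boxes_def)
  moreover have "free_rows k [] {} = {..<k}"
    by (auto simp: free_rows_def boxes_def)
  ultimately show ?thesis
    by (simp add: tab_gf_def)
qed

text \<open>The contribution of a new leftmost column whose \<open>1\<close>s form the set \<open>S\<close> of free rows
  \<open>U\<close>: afterwards the free rows are those of \<open>U\<close> lying in \<open>S\<close> or below \<open>min S\<close>.\<close>

definition new_col_gf :: "'a::field \<Rightarrow> 'a \<Rightarrow> nat set \<Rightarrow> 'a" where
  "new_col_gf q x U = (\<Sum>S\<in>Pow U - {{}}.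
      q ^ (card S - 1) * x ^ card {r\<in>U. r \<in> S \<or> (\<forall>s\<in>S. \<not> s < r)})"

lemma sum_Pow_power_card:
  fixes c :: "'a::comm_semiring_1"
  assumes "finite A"
  shows "(\<Sum>S\<in>Pow A. c ^ card S) = (c + 1) ^ card A"
  using prod_add[OF assms, of "\<lambda>_. c" "\<lambda>_. 1"] by simp

lemma new_col_gf_insert_min:
  assumes fin: "finite A" and less: "\<forall>a\<in>A. b < a"
  shows "new_col_gf q x (insert b A) = x * (1 + q * x) ^ card A + x * new_col_gf q x A"
proof -
  have b: "b \<notin> A"
    using less by auto
  let ?f = "\<lambda>S. q ^ (card S - 1) * x ^ card {r\<in>insert b A. r \<in> S \<or> (\<forall>s\<in>S. \<not> s < r)}"
  have split: "Pow (insert b A) - {{}} = insert b ` Pow A \<union> (Pow A - {{}})"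
    by (auto simp: Pow_insert)
  have inj: "inj_on (insert b) (Pow A)"
    using b by (intro inj_onI) (metis PowD insert_ident subsetD)
  have "sum ?f (insert b ` Pow A) = (\<Sum>S\<in>Pow A. x * (q * x) ^ card S)"
  proof (subst sum.reindex[OF inj], intro sum.cong refl)
    fix S assume S: "S \<in> Pow A"
    then have "finite S" "b \<notin> S"
      using fin b finite_subset by auto
    moreover have "{r\<in>insert b A. r \<in> insert b S \<or> (\<forall>s\<in>insert b S. \<not> s < r)} = insert b S"
      using S less by auto
    ultimately show "(?f \<circ> insert b) S = x * (q * x) ^ card S"
      by (simp add: power_mult_distrib)
  qed
  also have "\<dots> = x * (1 + q * x) ^ card A"
    using sum_Pow_power_card[OF fin, of "q * x"] by (simp add: add.commute flip: sum_distrib_left)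
  finally have with_b: "sum ?f (insert b ` Pow A) = x * (1 + q * x) ^ card A" .
  have without_b: "sum ?f (Pow A - {{}}) = x * new_col_gf q x A"
    unfolding new_col_gf_def sum_distrib_left
  proof (intro sum.cong refl)
    fix S assume S: "S \<in> Pow A - {{}}"
    then have "{r\<in>insert b A. r \<in> S \<or> (\<forall>s\<in>S. \<not> s < r)}
        = insert b {r\<in>A. r \<in> S \<or> (\<forall>s\<in>S. \<not> s < r)}"
      using less by force
    then show "?f S = x * (q ^ (card S - 1) * x ^ card {r\<in>A. r \<in> S \<or> (\<forall>s\<in>S. \<not> s < r)})"
      using b fin by simp
  qed
  have "new_col_gf q x (insert b A) = sum ?f (insert b ` Pow A) + sum ?f (Pow A - {{}})"
    unfolding new_col_gf_def split using fin b by (intro sum.union_disjoint) auto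
  with with_b without_b show ?thesis
    by simp
qed

lemma new_col_gf_closed_form:
  assumes "finite U"
  shows "(1 + q * x - x) * new_col_gf q x U = x * ((1 + q * x) ^ card U - x ^ card U)"
  using assms
proof (induction U rule: finite_linorder_min_induct)
  case empty
  then show ?case by (simp add: new_col_gf_def)
next
  case (insert b A)
  then have "b \<notin> A" by auto
  have "(1 + q * x - x) * new_col_gf q x (insert b A)
      = (1 + q * x - x) * (x * (1 + q * x) ^ card A) + x * ((1 + q * x - x) * new_col_gf q x A)"
    unfolding new_col_gf_insert_min[OF insert(1,2)] by (simp add: algebra_simps)
  also have "\<dots> = x * ((1 + q * x) * (1 + q * x) ^ card A - x * x ^ card A)"
    unfolding insert.IH by (simp add: algebra_simps)
  finally show ?case
    using \<open>b \<notin> A\<close> insert(1) by simp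
qed

lemma tab_gf_Cons_eq_sum_new_col_gf:
  "tab_gf q (k # L) k x
    = (\<Sum>T\<in>{T. is_ptab L T}. q ^ (card T - length L) * new_col_gf q x (free_rows k L T))"
proof -
  let ?P = "SIGMA T:{T. is_ptab L T}. Pow (free_rows k L T) - {{}}"
  let ?g = "\<lambda>(T, S). q ^ (card T - length L) *
    (q ^ (card S - 1) * x ^ card {r \<in> free_rows k L T. r \<in> S \<or> (\<forall>s\<in>S. \<not> s < r)})"
  have "tab_gf q (k # L) k x = sum ?g ?P"
    unfolding tab_gf_def
  proof (rule sum.reindex_bij_witness[where i = "\<lambda>(T, S). add_col T S"
        and j = "\<lambda>T'. (other_cols T', first_col T')"])
    fix T' assume "T' \<in> {T'. is_ptab (k # L) T'}"
    define T S where "T = other_cols T'" and "S = first_col T'"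
    have T'_eq: "T' = add_col T S"
      by (simp add: T_def S_def add_col_first_col_other_cols)
    with \<open>T' \<in> _\<close> have T: "is_ptab L T" and S: "S \<subseteq> free_rows k L T" "S \<noteq> {}"
      by (simp_all add: is_ptab_add_col_iff)
    then show "(other_cols T', first_col T') \<in> ?P"
      by (simp add: T_def S_def)
    have "finite S"
      using S(1) finite_free_rows by (rule finite_subset)
    with S(2) have "1 \<le> card S"
      by (simp add: Suc_le_eq card_gt_0_iff)
    then have "card (add_col T S) - length (k # L) = (card S - 1) + (card T - length L)"
      using card_add_col[OF is_ptab_finite[OF T] \<open>finite S\<close>] is_ptab_length_le_card[OF T]
      by simp
    then show "?g (other_cols T', first_col T')
        = q ^ (card T' - length (k # L)) * x ^ card (free_rows k (k # L) T')"
      unfolding T'_eq by (simp add: free_rows_add_col power_add mult_ac)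
  next
    fix T' show "(case (other_cols T', first_col T') of (T, S) \<Rightarrow> add_col T S) = T'"
      by (simp add: add_col_first_col_other_cols)
  next
    fix p assume "p \<in> ?P"
    then show "(case p of (T, S) \<Rightarrow> add_col T S) \<in> {T'. is_ptab (k # L) T'}"
      by (cases p) (simp add: is_ptab_add_col_iff)
    show "(other_cols (case p of (T, S) \<Rightarrow> add_col T S),
        first_col (case p of (T, S) \<Rightarrow> add_col T S)) = p"
      by (cases p) simp
  qed
  also have "\<dots> = (\<Sum>T\<in>{T. is_ptab L T}. q ^ (card T - length L) * new_col_gf q x (free_rows k L T))"
    unfolding new_col_gf_def
    by (subst sum.Sigma[symmetric]) (auto simp: sum_distrib_left intro!: sum.cong)
  finally show ?thesis .
qed

lemma tab_gf_Cons:
  "(1 + q * x - x) * tab_gf q (k # L) k x = x * (tab_gf q L k (1 + q * x) - tab_gf q L k x)"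
proof -
  have "(1 + q * x - x) * tab_gf q (k # L) k x = (\<Sum>T\<in>{T. is_ptab L T}.
      q ^ (card T - length L) * ((1 + q * x - x) * new_col_gf q x (free_rows k L T)))"
    unfolding tab_gf_Cons_eq_sum_new_col_gf by (simp add: sum_distrib_left algebra_simps)
  also have "\<dots> = (\<Sum>T\<in>{T. is_ptab L T}. q ^ (card T - length L)
      * (x * ((1 + q * x) ^ card (free_rows k L T) - x ^ card (free_rows k L T))))"
    by (simp add: new_col_gf_closed_form)
  also have "\<dots> = x * (tab_gf q L k (1 + q * x) - tab_gf q L k x)"
    unfolding tab_gf_def by (simp add: sum_distrib_left sum_subtractf algebra_simps)
  finally show ?thesis .
qed

lemma col_lengths_Cons_1: "col_lengths (1 # J) = col_lengths J"
proof -
  have "[0..<length (1 # J)] = 0 # map Suc [0..<length J]"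
    by (simp add: upt_conv_Cons map_Suc_upt del: upt_Suc)
  then show ?thesis
    unfolding col_lengths_def by (simp add: o_def)
qed

lemma col_lengths_inc_hd:
  assumes "is_comp J" "J \<noteq> []"
  shows "col_lengths (inc_hd J) = length J # col_lengths J"
proof -
  obtain a J' where J: "J = a # J'" "0 < a"
    using assms by (cases J) auto
  have "[0..<length J] = 0 # map Suc [0..<length J']"
    by (simp add: J upt_conv_Cons map_Suc_upt del: upt_Suc)
  moreover have "replicate a (Suc (length J'))
      = Suc (length J') # replicate (a - 1) (Suc (length J'))"
    using J(2) by (cases a) auto
  ultimately show ?thesis
    by (simp add: col_lengths_def J o_def del: upt_Suc)
qed

lemma col_lengths_le_length: "\<forall>l\<in>set (col_lengths J). l \<le> length J"
  by (auto simp: col_lengths_def)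

definition PT_gf :: "'a::field \<Rightarrow> nat list \<Rightarrow> nat \<Rightarrow> 'a" where
  "PT_gf q I b = tab_gf q (col_lengths I) (length I) (qint q (Suc b))"

lemma PTA_eq_PT_gf: "PTA q I = PT_gf q I 0"
  by (simp add: PTA_def PT_gf_def tab_gf_def perm_tableau_eq_is_ptab tab_rank_def)

lemma PT_gf_singleton: "PT_gf q [1] b = qint q (Suc b)"
  by (simp add: PT_gf_def col_lengths_def tab_gf_Nil)

lemma PT_gf_Cons_1: "PT_gf q (1 # J) b = qint q (Suc b) * PT_gf q J b"
  unfolding PT_gf_def col_lengths_Cons_1 length_Cons
  by (rule tab_gf_Suc[OF col_lengths_le_length])

lemma PT_gf_inc_hd:
  assumes "is_comp J" "J \<noteq> []"
  shows "q ^ Suc b * PT_gf q (inc_hd J) b = qint q (Suc b) * (PT_gf q J (Suc b) - PT_gf q J b)"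
proof -
  have step: "1 + q * qint q (Suc b) = qint q (Suc (Suc b))"
    by (simp only: qint_Suc')
  then have "1 + q * qint q (Suc b) - qint q (Suc b) = q ^ Suc b"
    by (simp add: qint_Suc[of q "Suc b"])
  with step tab_gf_Cons[of q "qint q (Suc b)" "length J" "col_lengths J"] show ?thesis
    by (simp add: PT_gf_def col_lengths_inc_hd[OF assms])
qed

section \<open>The matrix of the basis \<open>L_J(q)\<close> and its inverse\<close>

definition Linv :: "'a::field \<Rightarrow> nat list \<Rightarrow> nat list \<Rightarrow> 'a" where
  "Linv q J J' =
    (if finer J J' then (- 1 / q) ^ (length J - length J') * (1 / q) ^ st' J J' else 0)"

context
  fixes n :: nat and K J :: "nat list"
  assumes n: "0 < n" and K: "K \<in> comps n" and J: "J \<in> comps n"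
begin

private lemma comp_facts: "is_comp K" "is_comp J" "K \<noteq> []" "J \<noteq> []"
  using K J n comps_nonempty by (auto simp: comps_def)

lemma Lcoef_Cons_1_Cons_1: "Lcoef q (1 # J) (1 # K) = q ^ length K * Lcoef q J K"
  using K J comp_facts st_Cons_1_Cons_1 finer_Cons_1_Cons_1
  by (simp add: Lcoef_def comps_def power_add)

lemma Lcoef_inc_hd_Cons_1: "Lcoef q (inc_hd J) (1 # K) = Lcoef q J K"
  using K J comp_facts st_Cons_1_inc_hd finer_Cons_1_inc_hd
  by (simp add: Lcoef_def comps_def sum_list_inc_hd)

lemma Lcoef_Cons_1_inc_hd: "Lcoef q (1 # J) (inc_hd K) = 0"
  using comp_facts not_finer_inc_hd_Cons_1 by (simp add: Lcoef_def)

lemma Lcoef_inc_hd_inc_hd: "Lcoef q (inc_hd J) (inc_hd K) = Lcoef q J K"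
  using K J comp_facts st_inc_hd_inc_hd finer_inc_hd_inc_hd
  by (simp add: Lcoef_def comps_def sum_list_inc_hd is_comp_inc_hd)

lemma Linv_Cons_1_Cons_1: "Linv q (1 # J) (1 # K) = (1 / q) ^ length K * Linv q J K"
  using comp_facts st'_Cons_1_Cons_1 finer_Cons_1_Cons_1
  by (simp add: Linv_def power_add)

lemma Linv_Cons_1_inc_hd: "Linv q (1 # J) (inc_hd K) = - ((1 / q) ^ length K * Linv q J K)"
proof (cases "finer J K")
  case True
  then have "length K \<le> length J"
    by (rule finer_length_le[OF comp_facts(2,1,4,3)])
  then have "Linv q (1 # J) (inc_hd K)
      = (- 1 / q) ^ Suc (length J - length K) * (1 / q) ^ st' (1 # J) (inc_hd K)"
    using True finer_Cons_1_inc_hd[OF comp_facts(2,1,4,3)] by (simp add: Linv_def Suc_diff_le)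
  also have "\<dots>
      = - ((- 1 / q) ^ (length J - length K) * ((1 / q) ^ st' (1 # J) (inc_hd K) * (1 / q)))"
    by (simp add: algebra_simps)
  also have "(1 / q) ^ st' (1 # J) (inc_hd K) * (1 / q) = (1 / q) ^ (st' J K + length K)"
    by (simp flip: st'_Cons_1_inc_hd[OF comp_facts(2,1,4,3)] power_Suc2)
  finally show ?thesis
    using True by (simp add: Linv_def power_add algebra_simps)
next
  case False
  then show ?thesis
    using finer_Cons_1_inc_hd[OF comp_facts(2,1,4,3)] by (simp add: Linv_def)
qed

lemma Linv_inc_hd_Cons_1: "Linv q (inc_hd J) (1 # K) = 0"
  using comp_facts not_finer_inc_hd_Cons_1 by (simp add: Linv_def)

lemma Linv_inc_hd_inc_hd: "Linv q (inc_hd J) (inc_hd K) = Linv q J K"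
  using comp_facts st'_inc_hd_inc_hd finer_inc_hd_inc_hd by (simp add: Linv_def)

end

lemma sum_comps_Suc_Lcoef_Cons_1:
  assumes "0 < n" "K \<in> comps n"
  shows "(\<Sum>J\<in>comps (Suc n). Lcoef q J (1 # K) * f J)
    = (\<Sum>J\<in>comps n. Lcoef q J K * (q ^ length K * f (1 # J) + f (inc_hd J)))"
  unfolding sum_comps_Suc[OF assms(1)] using assms
  by (intro sum.cong)
    (simp_all only: Lcoef_Cons_1_Cons_1 Lcoef_inc_hd_Cons_1, simp add: algebra_simps)

lemma sum_comps_Suc_Lcoef_inc_hd:
  assumes "0 < n" "K \<in> comps n"
  shows "(\<Sum>J\<in>comps (Suc n). Lcoef q J (inc_hd K) * f J)
    = (\<Sum>J\<in>comps n. Lcoef q J K * f (inc_hd J))"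
  unfolding sum_comps_Suc[OF assms(1)] using assms
  by (intro sum.cong) (simp_all only: Lcoef_Cons_1_inc_hd Lcoef_inc_hd_inc_hd, simp)

lemma Lcoef_diag: "is_comp K \<Longrightarrow> Lcoef q K K = q ^ st K K"
  by (simp add: Lcoef_def finer_def)

section \<open>Expanding \<open>QFact_A\<close> in the basis \<open>L_J(q)\<close>\<close>

lemma qint_Suc_add_diff: "qint q (Suc (k + b)) - qint q (Suc b) = q ^ Suc b * qint q k"
  using qint_add[of q "Suc b" k] by (simp add: add.commute)

context
  fixes q :: "'a::field" and n :: nat and K :: "nat list"
  assumes q: "q \<noteq> 0" and n: "0 < n" and K: "K \<in> comps n"
    and IH: "\<And>b. (\<Sum>J\<in>comps n. Lcoef q J K * PT_gf q J b) = QFactA q K * qbinom q (length K) b"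
begin

private abbreviation (input) "F b \<equiv> \<Sum>J\<in>comps n. Lcoef q J K * PT_gf q J b"

private lemma PT_gf_inc_hd': "J \<in> comps n \<Longrightarrow>
    q ^ Suc b * PT_gf q (inc_hd J) b = qint q (Suc b) * (PT_gf q J (Suc b) - PT_gf q J b)"
  using PT_gf_inc_hd comps_is_comp comps_nonempty n by blast

lemma sum_Lcoef_PT_gf_Cons_1:
  "(\<Sum>J\<in>comps (Suc n). Lcoef q J (1 # K) * PT_gf q J b)
    = QFactA q (1 # K) * qbinom q (length (1 # K)) b"
proof -
  let ?k = "length K"
  have "q ^ Suc b * (\<Sum>J\<in>comps (Suc n). Lcoef q J (1 # K) * PT_gf q J b)
      = (\<Sum>J\<in>comps n. Lcoef q J K * (q ^ Suc b * q ^ ?k * qint q (Suc b) * PT_gf q J b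
          + q ^ Suc b * PT_gf q (inc_hd J) b))"
    unfolding sum_comps_Suc_Lcoef_Cons_1[OF n K] PT_gf_Cons_1
    by (simp add: sum_distrib_left algebra_simps)
  also have "\<dots> = (\<Sum>J\<in>comps n. Lcoef q J K * (q ^ Suc b * q ^ ?k * qint q (Suc b) * PT_gf q J b
          + qint q (Suc b) * (PT_gf q J (Suc b) - PT_gf q J b)))"
    by (intro sum.cong refl) (simp only: PT_gf_inc_hd')
  also have "\<dots> = q ^ Suc b * q ^ ?k * qint q (Suc b) * F b + qint q (Suc b) * (F (Suc b) - F b)"
    by (simp add: sum_distrib_left sum_subtractf sum.distrib algebra_simps)
  also have "\<dots> = QFactA q K * (q ^ Suc b * q ^ ?k * qint q (Suc b) * qbinom q ?k b
      + qint q (Suc b) * qbinom q ?k (Suc b) - qint q (Suc b) * qbinom q ?k b)"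
    by (simp add: IH algebra_simps)
  also have "\<dots> = QFactA q K * qbinom q ?k b
      * (q ^ Suc b * q ^ ?k * qint q (Suc b) + (qint q (Suc (?k + b)) - qint q (Suc b)))"
    using qbinom_qint[of q ?k b] by (simp add: algebra_simps)
  also have "q ^ Suc b * q ^ ?k * qint q (Suc b) + (qint q (Suc (?k + b)) - qint q (Suc b))
      = q ^ Suc b * (qint q ?k + q ^ ?k * qint q (Suc b))"
    by (simp only: qint_Suc_add_diff) (simp add: algebra_simps)
  also have "qint q ?k + q ^ ?k * qint q (Suc b) = qint q (Suc (?k + b))"
    using qint_add[of q ?k "Suc b"] by simp
  also have "QFactA q K * qbinom q ?k b * (q ^ Suc b * qint q (Suc (?k + b)))
      = q ^ Suc b * (QFactA q (1 # K) * qbinom q (length (1 # K)) b)"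
    unfolding QFactA_Cons_1 using qbinom_qint[of q ?k b] by (simp add: algebra_simps)
  finally show ?thesis
    using q by simp
qed

lemma sum_Lcoef_PT_gf_inc_hd:
  "(\<Sum>J\<in>comps (Suc n). Lcoef q J (inc_hd K) * PT_gf q J b)
    = QFactA q (inc_hd K) * qbinom q (length (inc_hd K)) b"
proof -
  let ?k = "length K"
  have "q ^ Suc b * (\<Sum>J\<in>comps (Suc n). Lcoef q J (inc_hd K) * PT_gf q J b)
      = (\<Sum>J\<in>comps n. Lcoef q J K * (q ^ Suc b * PT_gf q (inc_hd J) b))"
    unfolding sum_comps_Suc_Lcoef_inc_hd[OF n K] by (simp add: sum_distrib_left algebra_simps)
  also have "\<dots> = (\<Sum>J\<in>comps n. Lcoef q J K * (qint q (Suc b) * (PT_gf q J (Suc b) - PT_gf q J b)))"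
    by (intro sum.cong refl) (simp only: PT_gf_inc_hd')
  also have "\<dots> = qint q (Suc b) * (F (Suc b) - F b)"
    by (simp add: sum_distrib_left sum_subtractf algebra_simps)
  also have "\<dots> = QFactA q K * qbinom q ?k b * (qint q (Suc (?k + b)) - qint q (Suc b))"
    using qbinom_qint[of q ?k b] by (simp add: IH algebra_simps)
  also have "\<dots> = QFactA q K * qbinom q ?k b * (q ^ Suc b * qint q ?k)"
    by (simp only: qint_Suc_add_diff)
  also have "\<dots> = q ^ Suc b * (QFactA q (inc_hd K) * qbinom q (length (inc_hd K)) b)"
    using K n by (simp add: QFactA_inc_hd comps_nonempty)
  finally show ?thesis
    using q by simp
qed

end

lemma sum_Lcoef_PT_gf:
  fixes q :: "'a::field"
  assumes "q \<noteq> 0" "0 < n" "K \<in> comps n"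
  shows "(\<Sum>J\<in>comps n. Lcoef q J K * PT_gf q J b) = QFactA q K * qbinom q (length K) b"
  using assms(2,3)
proof (induction n arbitrary: K b rule: nat_induct_non_zero)
  case 1
  then show ?case
    by (simp add: comps_Suc_0 Lcoef_def st_def finer_def QFactA_singleton qbinom_1_left
        PT_gf_singleton[unfolded One_nat_def])
next
  case (Suc n K b)
  from Suc.prems Suc.hyps(1) show ?case
  proof (cases rule: comps_SucE)
    case (1 K0)
    then show ?thesis
      using sum_Lcoef_PT_gf_Cons_1[OF assms(1) Suc.hyps(1) _ Suc.IH] by simp
  next
    case (2 K0)
    then show ?thesis
      using sum_Lcoef_PT_gf_inc_hd[OF assms(1) Suc.hyps(1) _ Suc.IH] by simp
  qed
qed

section \<open>Inverting the matrix\<close>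

lemma RHS_eq_sum_Linv:
  assumes "J \<in> comps n"
  shows "RHS q J = (\<Sum>J'\<in>comps n. Linv q J J' * QFactA q J')"
proof -
  have "RHS q J = (\<Sum>J'\<in>comps n. if finer J J'
      then (- 1 / q) ^ (length J - length J') * (1 / q) ^ st' J J' * QFactA q J' else 0)"
    unfolding RHS_def comps_sum_list[OF assms] by (rule sum.inter_filter) simp
  also have "\<dots> = (\<Sum>J'\<in>comps n. Linv q J J' * QFactA q J')"
    by (intro sum.cong) (simp_all add: Linv_def)
  finally show ?thesis .
qed


context
  fixes q :: "'a::field" and n :: nat and K :: "nat list"
  assumes q: "q \<noteq> 0" and n: "0 < n" and K: "K \<in> comps n"
    and IH: "\<And>J'. J' \<in> comps n \<Longrightarrow>
      (\<Sum>J\<in>comps n. Lcoef q J K * Linv q J J') = (if J' = K then 1 else 0)"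
begin

lemma sum_Lcoef_Linv_Cons_1:
  assumes "J' \<in> comps (Suc n)"
  shows "(\<Sum>J\<in>comps (Suc n). Lcoef q J (1 # K) * Linv q J J') = (if J' = 1 # K then 1 else 0)"
  using assms n
proof (cases rule: comps_SucE)
  case (1 J0)
  then have "(\<Sum>J\<in>comps (Suc n). Lcoef q J (1 # K) * Linv q J J')
      = (\<Sum>J\<in>comps n. q ^ length K * (1 / q) ^ length J0 * (Lcoef q J K * Linv q J J0))"
    unfolding sum_comps_Suc_Lcoef_Cons_1[OF n K] using n
    by (intro sum.cong refl) (simp only: Linv_Cons_1_Cons_1 Linv_inc_hd_Cons_1, simp)
  also have "\<dots> = q ^ length K * (1 / q) ^ length J0 * (\<Sum>J\<in>comps n. Lcoef q J K * Linv q J J0)"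
    by (simp only: sum_distrib_left)
  finally show ?thesis
    using 1 IH q by (simp add: power_one_over)
next
  case (2 J0)
  then have "(\<Sum>J\<in>comps (Suc n). Lcoef q J (1 # K) * Linv q J J')
      = (\<Sum>J\<in>comps n. (1 - q ^ length K * (1 / q) ^ length J0) * (Lcoef q J K * Linv q J J0))"
    unfolding sum_comps_Suc_Lcoef_Cons_1[OF n K] using n
    by (intro sum.cong refl)
      (simp only: Linv_Cons_1_inc_hd Linv_inc_hd_inc_hd, simp add: algebra_simps)
  also have "\<dots> = (1 - q ^ length K * (1 / q) ^ length J0) * (\<Sum>J\<in>comps n. Lcoef q J K * Linv q J J0)"
    by (simp only: sum_distrib_left)
  finally show ?thesis
    using 2 IH q inc_hd_neq_Cons_1[OF _ n] by (simp add: power_one_over)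
qed

lemma sum_Lcoef_Linv_inc_hd:
  assumes "J' \<in> comps (Suc n)"
  shows "(\<Sum>J\<in>comps (Suc n). Lcoef q J (inc_hd K) * Linv q J J') = (if J' = inc_hd K then 1 else 0)"
  using assms n
proof (cases rule: comps_SucE)
  case (1 J0)
  then have "J' \<noteq> inc_hd K"
    using inc_hd_neq_Cons_1[OF K n] by metis
  moreover have "(\<Sum>J\<in>comps (Suc n). Lcoef q J (inc_hd K) * Linv q J J') = 0"
    unfolding sum_comps_Suc_Lcoef_inc_hd[OF n K] using 1 n
    by (intro sum.neutral ballI) (simp only: Linv_inc_hd_Cons_1 mult_zero_right)
  ultimately show ?thesis
    by simp
next
  case (2 J0)
  then have "(\<Sum>J\<in>comps (Suc n). Lcoef q J (inc_hd K) * Linv q J J')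
      = (\<Sum>J\<in>comps n. Lcoef q J K * Linv q J J0)"
    unfolding sum_comps_Suc_Lcoef_inc_hd[OF n K] using n
    by (intro sum.cong refl) (simp only: Linv_inc_hd_inc_hd)
  with 2 show ?thesis
    using IH K n inc_hd_inj comps_nonempty by auto
qed

end

lemma sum_Lcoef_Linv:
  fixes q :: "'a::field"
  assumes q: "q \<noteq> 0" and "0 < n" "K \<in> comps n" "J' \<in> comps n"
  shows "(\<Sum>J\<in>comps n. Lcoef q J K * Linv q J J') = (if J' = K then 1 else 0)"
  using assms(2-)
proof (induction n arbitrary: K J' rule: nat_induct_non_zero)
  case 1
  then show ?case
    by (simp add: comps_Suc_0 Lcoef_def st_def Linv_def st'_def finer_def)
next
  case (Suc n K J')
  from Suc.prems(1) Suc.hyps(1) show ?case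
  proof (cases rule: comps_SucE)
    case (1 K0)
    then show ?thesis
      using sum_Lcoef_Linv_Cons_1[OF q Suc.hyps(1) _ Suc.IH Suc.prems(2)] by simp
  next
    case (2 K0)
    then show ?thesis
      using sum_Lcoef_Linv_inc_hd[OF q Suc.hyps(1) _ Suc.IH Suc.prems(2)] by simp
  qed
qed

section \<open>Packed words\<close>

definition last_occs :: "nat list \<Rightarrow> nat set" where
  "last_occs t = {j. j < length t \<and> t ! j \<notin> set (drop (Suc j) t)}"

lemma finite_last_occs [simp]: "finite (last_occs t)"
  by (simp add: last_occs_def)

lemma last_occs_bij: "bij_betw (\<lambda>j. t ! j) (last_occs t) (set t)"
proof (rule bij_betwI')
  have neq: "t ! j \<noteq> t ! j'" if "j \<in> last_occs t" "j < j'" "j' < length t" for j j'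
  proof -
    have "t ! j' = drop (Suc j) t ! (j' - Suc j)" "j' - Suc j < length (drop (Suc j) t)"
      using that(2,3) by simp_all
    then have "t ! j' \<in> set (drop (Suc j) t)"
      by (metis nth_mem)
    with that(1) show ?thesis
      by (auto simp: last_occs_def)
  qed
  fix j j' assume "j \<in> last_occs t" "j' \<in> last_occs t"
  then show "(t ! j = t ! j') = (j = j')"
    using neq[of j j'] neq[of j' j] by (auto simp: last_occs_def) (metis linorder_neqE_nat)
next
  fix j assume "j \<in> last_occs t"
  then show "t ! j \<in> set t"
    by (simp add: last_occs_def)
next
  fix x assume "x \<in> set t"
  define j where "j = Max {j. j < length t \<and> t ! j = x}"
  have j: "j < length t" "t ! j = x"
    using Max_in[of "{j. j < length t \<and> t ! j = x}"] \<open>x \<in> set t\<close>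
    by (auto simp: j_def in_set_conv_nth)
  have "t ! j \<notin> set (drop (Suc j) t)"
  proof
    assume "t ! j \<in> set (drop (Suc j) t)"
    then obtain i where "i < length t - Suc j" "t ! (Suc j + i) = x"
      using j by (auto simp: in_set_conv_nth)
    then have "Suc j + i \<le> j"
      unfolding j_def by (intro Max_ge) auto
    then show False
      by simp
  qed
  with j show "\<exists>j\<in>last_occs t. x = t ! j"
    by (auto simp: last_occs_def)
qed

lemma card_last_occs_less: "card {j \<in> last_occs t. t ! j < a} = card {b \<in> set t. b < a}"
proof (rule bij_betw_same_card)
  show "bij_betw (\<lambda>j. t ! j) {j \<in> last_occs t. t ! j < a} {b \<in> set t. b < a}"
    using last_occs_bij[of t] unfolding bij_betw_def inj_on_def by auto
qed

lemma wdes_eq_last_occs: "wdes t = Suc ` (last_occs t - {length t - 1})"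
proof (intro set_eqI iffI)
  fix p assume "p \<in> wdes t"
  then have "p = Suc (p - 1)" "p - 1 \<in> last_occs t - {length t - 1}"
    by (auto simp: wdes_def last_occs_def)
  then show "p \<in> Suc ` (last_occs t - {length t - 1})"
    by blast
qed (auto simp: wdes_def last_occs_def)

lemma card_wdes: "t \<noteq> [] \<Longrightarrow> card (set t) = Suc (card (wdes t))"
proof -
  assume t: "t \<noteq> []"
  then have "length t - 1 \<in> last_occs t"
    by (auto simp: last_occs_def)
  moreover have "card (wdes t) = card (last_occs t - {length t - 1})"
    by (simp add: wdes_eq_last_occs card_image)
  ultimately show ?thesis
    using bij_betw_same_card[OF last_occs_bij[of t]] t
    by (simp add: card_Suc_Diff1 card_gt_0_iff)
qed

lemma wdes_Cons: "wdes (a # t) = Suc ` wdes t \<union> (if a \<notin> set t \<and> t \<noteq> [] then {1} else {})"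
proof (intro set_eqI)
  fix p
  show "p \<in> wdes (a # t) \<longleftrightarrow> p \<in> Suc ` wdes t \<union> (if a \<notin> set t \<and> t \<noteq> [] then {1} else {})"
    by (cases p rule: nat.exhaust[case_product nat.exhaust[of "p - 1"]])
      (auto simp: wdes_def image_iff)
qed

definition sinv_pairs :: "nat list \<Rightarrow> (nat \<times> nat) set" where
  "sinv_pairs u = {(i, j). i < j \<and> j < length u \<and> u ! i > u ! j \<and> u ! j \<notin> set (drop (Suc j) u)}"

lemma sinv_eq_card_sinv_pairs: "sinv u = card (sinv_pairs u)"
  by (simp add: sinv_def sinv_pairs_def)

lemma finite_sinv_pairs [simp]: "finite (sinv_pairs u)"
  by (rule finite_subset[of _ "{..<length u} \<times> {..<length u}"]) (auto simp: sinv_pairs_def)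

lemma sinv_Cons: "sinv (a # t) = sinv t + card {b \<in> set t. b < a}"
proof -
  let ?first = "(\<lambda>j. (0, Suc j)) ` {j \<in> last_occs t. t ! j < a}"
  have split: "sinv_pairs (a # t) = ?first \<union> map_prod Suc Suc ` sinv_pairs t"
  proof (intro set_eqI)
    fix x :: "nat \<times> nat"
    obtain i j where x: "x = (i, j)"
      by (cases x)
    show "x \<in> sinv_pairs (a # t) \<longleftrightarrow> x \<in> ?first \<union> map_prod Suc Suc ` sinv_pairs t"
      unfolding x by (cases i; cases j) (auto simp: sinv_pairs_def last_occs_def)
  qed
  have "card ?first = card {b \<in> set t. b < a}"
    by (subst card_image) (auto intro: inj_onI simp: card_last_occs_less)
  moreover have "card (map_prod Suc Suc ` sinv_pairs t) = card (sinv_pairs t)"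
    by (rule card_image) (auto intro: inj_onI)
  moreover have "?first \<inter> map_prod Suc Suc ` sinv_pairs t = {}"
    by auto
  ultimately show ?thesis
    unfolding sinv_eq_card_sinv_pairs split
    by (subst card_Un_disjoint) (auto simp: last_occs_def)
qed

lemma wdes_map:
  assumes "inj_on f (set w)"
  shows "wdes (map f w) = wdes w"
proof -
  have "f (w ! (p - 1)) \<in> f ` set (drop p w) \<longleftrightarrow> w ! (p - 1) \<in> set (drop p w)"
    if "p < length w" for p
    using that assms set_drop_subset[of p w] by (intro inj_on_image_mem_iff) auto
  then show ?thesis
    unfolding wdes_def by (intro Collect_cong) (simp add: drop_map cong: conj_cong)
qed

lemma sinv_map:
  assumes mono: "\<And>x y. x \<in> set w \<Longrightarrow> y \<in> set w \<Longrightarrow> x < y \<Longrightarrow> f x < f y"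
  shows "sinv (map f w) = sinv w"
proof -
  have less_iff: "f x < f y \<longleftrightarrow> x < y" if "x \<in> set w" "y \<in> set w" for x y
    using mono[OF that] mono[OF that(2,1)] by (metis linorder_neqE_nat order_less_asym)
  then have "inj_on f (set w)"
    by (intro inj_onI) (metis linorder_neqE_nat order_less_irrefl)
  then have "f (w ! j) \<in> f ` set (drop (Suc j) w) \<longleftrightarrow> w ! j \<in> set (drop (Suc j) w)"
    if "j < length w" for j
    using that set_drop_subset[of "Suc j" w] by (intro inj_on_image_mem_iff) auto
  with less_iff have "sinv_pairs (map f w) = sinv_pairs w"
    unfolding sinv_pairs_def by (intro Collect_cong) (auto simp: drop_map cong: conj_cong)
  then show ?thesis
    by (simp add: sinv_eq_card_sinv_pairs)
qed

definition rank :: "nat set \<Rightarrow> nat \<Rightarrow> nat" where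
  "rank S x = card {y \<in> S. y \<le> x}"

lemma pack_eq_map_rank: "pack w = map (rank (set w)) w"
  by (simp add: pack_def rank_def)

lemma rank_mono:
  assumes "finite S" "y \<in> S" "x < y"
  shows "rank S x < rank S y"
proof -
  have "{z \<in> S. z \<le> x} \<subseteq> {z \<in> S. z \<le> y}" "y \<in> {z \<in> S. z \<le> y} - {z \<in> S. z \<le> x}"
    using assms by auto
  then have "{z \<in> S. z \<le> x} \<subset> {z \<in> S. z \<le> y}"
    by blast
  with assms(1) show ?thesis
    unfolding rank_def by (intro psubset_card_mono) auto
qed

lemma rank_image: "finite S \<Longrightarrow> rank S ` S = {1..card S}"
proof (induction S rule: finite_linorder_max_induct)
  case (insert b A)
  then have "b \<notin> A"
    by auto
  have "rank (insert b A) x = rank A x" if "x \<in> A" for x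
  proof -
    have "{y \<in> insert b A. y \<le> x} = {y \<in> A. y \<le> x}"
      using that insert.hyps(2) by auto
    then show ?thesis
      by (simp add: rank_def)
  qed
  moreover have "{y \<in> insert b A. y \<le> b} = insert b A"
    using insert.hyps(2) by auto
  ultimately have "rank (insert b A) ` insert b A = insert (Suc (card A)) (rank A ` A)"
    using \<open>b \<notin> A\<close> insert.hyps(1) by (auto simp: rank_def image_iff)
  with insert \<open>b \<notin> A\<close> show ?case
    by auto
qed simp

lemma set_pack: "set (pack w) = {1..card (set w)}"
  by (simp add: pack_eq_map_rank rank_image)

lemma packed_pack: "packed (pack w)"
  by (simp add: packed_def set_pack)

lemma length_pack[simp]: "length (pack w) = length w"
  by (simp add: pack_def)

lemma sinv_pack: "sinv (pack w) = sinv w"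
  unfolding pack_eq_map_rank by (rule sinv_map) (auto intro: rank_mono)

lemma sinv_length_1: "length u = 1 \<Longrightarrow> sinv u = 0"
proof -
  assume "length u = 1"
  then have "sinv_pairs u = {}"
    by (auto simp: sinv_pairs_def)
  then show ?thesis
    by (simp add: sinv_eq_card_sinv_pairs)
qed

lemma tildeS_1_pack: "tildeS (Suc 0) (pack v) = (if length v = 1 then 1 else 0)"
proof -
  have "length (pack v) = 1 \<Longrightarrow> sorted (pack v)"
    by (cases "pack v") auto
  then show ?thesis
    using packed_pack[of v] by (auto simp: tildeS_def)
qed

lemma packed_Nil [simp]: "packed []"
  by (simp add: packed_def)

lemma power_mult_power_int_diff:
  fixes q :: "'a::field"
  assumes "q \<noteq> 0"
  shows "q ^ a * q powi (int b - int a) = q ^ b"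
  using power_int_add[of q "int b - int a" "int a"] assms by (simp add: mult.commute)

lemma star_q_tildeS_1:
  assumes "packed u" "u \<noteq> []"
  shows "star_q q (tildeS (Suc 0)) g u
    = g (pack (tl u)) * q powi (int (sinv u) - int (sinv (tl u)))"
proof -
  have "star_q q (tildeS (Suc 0)) g u = (\<Sum>k\<le>length u. if k = 1
      then g (pack (tl u)) * q powi (int (sinv u) - int (sinv (tl u))) else 0)"
    unfolding star_q_def if_P[OF assms(1)]
  proof (intro sum.cong refl)
    fix k assume "k \<in> {..length u}"
    then show "tildeS (Suc 0) (pack (take k u)) * g (pack (drop k u)) * q powi (int (sinv u)
        - int (sinv (pack (take k u))) - int (sinv (pack (drop k u))))
      = (if k = 1 then g (pack (tl u)) * q powi (int (sinv u) - int (sinv (tl u))) else 0)"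
      using assms(2) by (auto simp: tildeS_1_pack min_def sinv_pack sinv_length_1 drop_Suc)
  qed
  then show ?thesis
    using assms(2) by (simp add: Suc_le_eq)
qed

lemma star_list_replicate_tildeS_1:
  fixes q :: "'a::field"
  assumes q: "q \<noteq> 0"
  shows "star_list q (replicate n (tildeS 1)) u
    = (if packed u \<and> length u = n then q ^ sinv u else 0)"
proof (induction n arbitrary: u)
  case 0
  show ?case by (simp add: star_list_def unitM_def sinv_def)
next
  case (Suc n u)
  have "star_list q (replicate (Suc n) (tildeS 1)) u
      = star_q q (tildeS 1) (star_list q (replicate n (tildeS 1))) u"
    by (simp add: star_list_def)
  also have "\<dots> = (if packed u \<and> length u = Suc n then q ^ sinv u else 0)"
  proof (cases "packed u \<and> u \<noteq> []")
    case True
    then show ?thesis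
      by (cases u) (simp_all add: star_q_tildeS_1 Suc.IH[unfolded One_nat_def] packed_pack
          sinv_pack power_mult_power_int_diff[OF q])
  qed (auto simp: star_q_def tildeS_def)
  finally show ?case .
qed

section \<open>Counting packed words by \<open>sinv\<close>\<close>

definition packed_words :: "nat \<Rightarrow> nat list set" where
  "packed_words n = {u. packed u \<and> length u = n}"

definition wdes_gf :: "'a::field \<Rightarrow> nat \<Rightarrow> nat set \<Rightarrow> 'a" where
  "wdes_gf q n D = (\<Sum>u\<in>{u \<in> packed_words n. wdes u = D}. q ^ sinv u)"

lemma finite_packed_words [simp]: "finite (packed_words n)"
proof (rule finite_subset)
  show "packed_words n \<subseteq> {u. set u \<subseteq> {0..n} \<and> length u \<le> n}"
  proof clarify
    fix u assume u: "u \<in> packed_words n"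
    then have "set u = {1..card (set u)}" "length u = n"
      by (auto simp: packed_words_def packed_def)
    moreover have "card (set u) \<le> length u"
      by (rule card_length)
    ultimately have "\<forall>x\<in>set u. x \<le> n"
      by (metis atLeastAtMost_iff order.trans)
    with \<open>length u = n\<close> show "set u \<subseteq> {0..n} \<and> length u \<le> n"
      by auto
  qed
qed (rule finite_lists_length_le, simp)

lemma packed_Cons_mem_iff: "a \<in> set t \<Longrightarrow> packed (a # t) \<longleftrightarrow> packed t"
  by (simp add: packed_def insert_absorb)

lemma packed_mem_iff: "packed t \<Longrightarrow> a \<in> set t \<longleftrightarrow> a \<in> {1..card (set t)}"
  by (metis packed_def)

lemma zero_notin_wdes: "0 \<notin> wdes t"
  by (simp add: wdes_def)

lemma wdes_Cons_mem: "a \<in> set t \<Longrightarrow> wdes (a # t) = Suc ` wdes t"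
  and wdes_Cons_not_mem: "a \<notin> set t \<Longrightarrow> t \<noteq> [] \<Longrightarrow> wdes (a # t) = insert 1 (Suc ` wdes t)"
  by (simp_all add: wdes_Cons)

lemma sinv_Cons_packed:
  assumes "packed (a # t)"
  shows "sinv (a # t) = sinv t + (a - 1)"
proof -
  have set_Cons: "set (a # t) = {1..card (set (a # t))}"
    using assms by (simp add: packed_def)
  then have "a \<le> card (set (a # t))"
    by (metis atLeastAtMost_iff list.set_intros(1))
  with set_Cons have "{b \<in> set t. b < a} = {1..<a}"
    by (auto simp: set_eq_iff)
  then show ?thesis
    by (simp add: sinv_Cons)
qed

lemma sum_Sigma_power_eq_qint:
  assumes "finite W"
  shows "(\<Sum>(w, a)\<in>W \<times> {1..m}. q ^ (f w + (a - 1))) = qint q m * (\<Sum>w\<in>W. q ^ f w)"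
proof -
  have "(\<Sum>(w, a)\<in>W \<times> {1..m}. q ^ (f w + (a - 1)))
      = (\<Sum>w\<in>W. q ^ f w * (\<Sum>a\<in>{1..m}. q ^ (a - 1)))"
    using assms by (simp add: sum.Sigma[symmetric] power_add sum_distrib_left)
  then show ?thesis
    unfolding sum_power_atLeastAtMost_eq_qint by (simp add: sum_distrib_left mult.commute)
qed

definition skip :: "nat \<Rightarrow> nat \<Rightarrow> nat" where
  "skip a x = (if a \<le> x then Suc x else x)"

definition unskip :: "nat \<Rightarrow> nat \<Rightarrow> nat" where
  "unskip a x = (if a < x then x - 1 else x)"

lemma unskip_skip [simp]: "unskip a (skip a x) = x"
  by (simp add: skip_def unskip_def)

lemma map_skip_unskip: "a \<notin> set t \<Longrightarrow> map (skip a \<circ> unskip a) t = t"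
  by (induction t) (auto simp: skip_def unskip_def)

lemma skip_image: "a \<in> {1..Suc m} \<Longrightarrow> skip a ` {1..m} = {1..Suc m} - {a}"
proof (intro set_eqI iffI)
  fix y assume "a \<in> {1..Suc m}" "y \<in> {1..Suc m} - {a}"
  then show "y \<in> skip a ` {1..m}"
    by (cases "y < a") (auto simp: skip_def image_iff intro!: bexI[of _ y] bexI[of _ "y - 1"])
qed (auto simp: skip_def)

lemma unskip_image: "a \<in> {1..Suc m} \<Longrightarrow> unskip a ` ({1..Suc m} - {a}) = {1..m}"
  using image_image[of "unskip a" "skip a" "{1..m}"] skip_image[of a m] by simp

lemma unskip_mono: "x < y \<Longrightarrow> x \<noteq> a \<Longrightarrow> y \<noteq> a \<Longrightarrow> unskip a x < unskip a y"
  and unskip_inj: "unskip a x = unskip a y \<Longrightarrow> x \<noteq> a \<Longrightarrow> y \<noteq> a \<Longrightarrow> x = y"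
  by (auto simp: unskip_def split: if_splits)

lemma wdes_map_skip: "wdes (map (skip a) w) = wdes w"
  by (rule wdes_map) (auto simp: inj_on_def skip_def split: if_splits)

lemma sinv_map_unskip: "a \<notin> set t \<Longrightarrow> sinv (map (unskip a) t) = sinv t"
  by (rule sinv_map) (metis unskip_mono)

lemma wdes_map_unskip: "a \<notin> set t \<Longrightarrow> wdes (map (unskip a) t) = wdes t"
  by (rule wdes_map) (metis inj_onI unskip_inj)

lemma Cons_mem_wdes_Suc_image_iff:
  assumes n: "0 < n" and D: "0 \<notin> D"
  shows "a # t \<in> {u \<in> packed_words (Suc n). wdes u = Suc ` D}
    \<longleftrightarrow> t \<in> {w \<in> packed_words n. wdes w = D} \<and> a \<in> {1..card (set t)}"
proof
  assume u: "a # t \<in> {u \<in> packed_words (Suc n). wdes u = Suc ` D}"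
  with n have "t \<noteq> []"
    by (auto simp: packed_words_def)
  have "a \<in> set t"
  proof (rule ccontr)
    assume "a \<notin> set t"
    with \<open>t \<noteq> []\<close> have "1 \<in> wdes (a # t)"
      by (simp add: wdes_Cons_not_mem)
    with u D show False
      by auto
  qed
  with u have "Suc ` wdes t = Suc ` D" "packed t" "length t = n"
    by (auto simp: wdes_Cons_mem packed_words_def packed_Cons_mem_iff)
  with \<open>a \<in> set t\<close> show "t \<in> {w \<in> packed_words n. wdes w = D} \<and> a \<in> {1..card (set t)}"
    using packed_mem_iff[of t a] by (simp add: packed_words_def inj_image_eq_iff)
next
  assume "t \<in> {w \<in> packed_words n. wdes w = D} \<and> a \<in> {1..card (set t)}"
  then have "t \<in> packed_words n" "wdes t = D" "a \<in> set t"
    by (simp_all add: packed_words_def packed_mem_iff)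
  then show "a # t \<in> {u \<in> packed_words (Suc n). wdes u = Suc ` D}"
    by (simp add: packed_words_def packed_Cons_mem_iff wdes_Cons_mem)
qed

lemma wdes_gf_Suc_image:
  assumes n: "0 < n" and D: "0 \<notin> D"
  shows "wdes_gf q (Suc n) (Suc ` D) = qint q (Suc (card D)) * wdes_gf q n D"
proof -
  let ?W = "{w \<in> packed_words n. wdes w = D}"
  have card_set: "card (set w) = Suc (card D)" if "w \<in> ?W" for w
    using that n card_wdes[of w] by (auto simp: packed_words_def)
  have "wdes_gf q (Suc n) (Suc ` D) = (\<Sum>(w, a)\<in>?W \<times> {1..Suc (card D)}. q ^ (sinv w + (a - 1)))"
    unfolding wdes_gf_def
  proof (rule sum.reindex_bij_witness[where i = "\<lambda>(w, a). a # w" and j = "\<lambda>u. (tl u, hd u)"])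
    fix u assume u: "u \<in> {u \<in> packed_words (Suc n). wdes u = Suc ` D}"
    then obtain a t where u_eq: "u = a # t"
      by (cases u) (auto simp: packed_words_def)
    with u have t: "t \<in> ?W" "a \<in> {1..card (set t)}"
      unfolding u_eq Cons_mem_wdes_Suc_image_iff[OF n D] by simp_all
    with u_eq card_set show "(tl u, hd u) \<in> ?W \<times> {1..Suc (card D)}"
      by simp
    have "sinv u = sinv t + (a - 1)"
      using u u_eq by (simp add: packed_words_def sinv_Cons_packed)
    then show "(case (tl u, hd u) of (w, a) \<Rightarrow> q ^ (sinv w + (a - 1))) = q ^ sinv u"
      using u_eq by simp
    show "(case (tl u, hd u) of (w, a) \<Rightarrow> a # w) = u"
      using u_eq by simp
  next
    fix p assume "p \<in> ?W \<times> {1..Suc (card D)}"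
    then obtain w a where "p = (w, a)" "w \<in> ?W" "a \<in> {1..card (set w)}"
      using card_set by auto
    then show "(case p of (w, a) \<Rightarrow> a # w) \<in> {u \<in> packed_words (Suc n). wdes u = Suc ` D}"
      using Cons_mem_wdes_Suc_image_iff[OF n D, of a w] by simp
  qed auto
  then show ?thesis
    using sum_Sigma_power_eq_qint[of ?W q sinv "Suc (card D)"] by (simp add: wdes_gf_def)
qed

text \<open>Words whose first letter does not occur again: removing it and closing the gap in the
  alphabet gives a packed word with one letter less.\<close>

lemma Cons_skip_mem_packed_words:
  assumes "w \<in> packed_words n" "a \<in> {1..Suc (card (set w))}"
  shows "a # map (skip a) w \<in> packed_words (Suc n)" "a \<notin> set (map (skip a) w)"
proof -
  define m where "m = card (set w)"
  have a: "a \<in> {1..Suc m}"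
    using assms(2) by (simp add: m_def)
  have "set w = {1..m}"
    using assms(1) by (simp add: packed_words_def packed_def m_def)
  then have "set (map (skip a) w) = {1..Suc m} - {a}"
    using skip_image[OF a] by simp
  with assms show "a # map (skip a) w \<in> packed_words (Suc n)" "a \<notin> set (map (skip a) w)"
    by (auto simp: packed_words_def packed_def insert_absorb m_def)
qed

lemma unskip_mem_packed_words:
  assumes "a # t \<in> packed_words (Suc n)" "a \<notin> set t"
  shows "map (unskip a) t \<in> packed_words n" "a \<in> {1..Suc (card (set (map (unskip a) t)))}"
proof -
  define m where "m = card (set t)"
  have set_u: "set (a # t) = {1..Suc m}"
    using assms by (simp add: packed_words_def packed_def m_def)
  then have a: "a \<in> {1..Suc m}"
    by auto
  from set_u assms(2) have "set t = {1..Suc m} - {a}"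
    by auto
  then have "set (map (unskip a) t) = {1..m}"
    using unskip_image[OF a] by simp
  with assms a show "map (unskip a) t \<in> packed_words n"
    "a \<in> {1..Suc (card (set (map (unskip a) t)))}"
    by (simp_all add: packed_words_def packed_def)
qed

lemma Cons_mem_wdes_insert_1_imp:
  assumes n: "0 < n" and D: "0 \<notin> D"
    and u: "a # t \<in> {u \<in> packed_words (Suc n). wdes u = insert 1 (Suc ` D)}"
  shows "a \<notin> set t" "map (unskip a) t \<in> {w \<in> packed_words n. wdes w = D}"
    "a \<in> {1..Suc (card (set (map (unskip a) t)))}"
    "sinv (a # t) = sinv (map (unskip a) t) + (a - 1)"
proof -
  have "t \<noteq> []"
    using u n by (auto simp: packed_words_def)
  show "a \<notin> set t"
  proof
    assume "a \<in> set t"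
    with u have "1 \<in> Suc ` wdes t"
      by (simp add: wdes_Cons_mem[symmetric])
    with zero_notin_wdes[of t] show False
      by auto
  qed
  have "insert 1 (Suc ` wdes t) = insert 1 (Suc ` D)"
    using u \<open>a \<notin> set t\<close> \<open>t \<noteq> []\<close> by (simp add: wdes_Cons_not_mem)
  moreover have "1 \<notin> Suc ` wdes t" "1 \<notin> Suc ` D"
    using zero_notin_wdes[of t] D by auto
  ultimately have "wdes (map (unskip a) t) = D"
    using \<open>a \<notin> set t\<close> by (metis insert_ident inj_image_eq_iff inj_Suc wdes_map_unskip)
  moreover have u_packed: "a # t \<in> packed_words (Suc n)"
    using u by simp
  ultimately show "map (unskip a) t \<in> {w \<in> packed_words n. wdes w = D}"
    "a \<in> {1..Suc (card (set (map (unskip a) t)))}"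
    using unskip_mem_packed_words[OF u_packed \<open>a \<notin> set t\<close>] by simp_all
  show "sinv (a # t) = sinv (map (unskip a) t) + (a - 1)"
    using u_packed \<open>a \<notin> set t\<close> by (simp add: packed_words_def sinv_Cons_packed sinv_map_unskip)
qed

lemma wdes_gf_insert_1:
  assumes n: "0 < n" and D: "0 \<notin> D"
  shows "wdes_gf q (Suc n) (insert 1 (Suc ` D)) = qint q (Suc (Suc (card D))) * wdes_gf q n D"
proof -
  let ?W = "{w \<in> packed_words n. wdes w = D}"
  let ?A = "{u \<in> packed_words (Suc n). wdes u = insert 1 (Suc ` D)}"
  have card_set: "card (set w) = Suc (card D)" if "w \<in> ?W" for w
    using that n card_wdes[of w] by (auto simp: packed_words_def)
  have "wdes_gf q (Suc n) (insert 1 (Suc ` D))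
      = (\<Sum>(w, a)\<in>?W \<times> {1..Suc (Suc (card D))}. q ^ (sinv w + (a - 1)))"
    unfolding wdes_gf_def
  proof (rule sum.reindex_bij_witness[where i = "\<lambda>(w, a). a # map (skip a) w"
        and j = "\<lambda>u. (map (unskip (hd u)) (tl u), hd u)"])
    fix u assume "u \<in> ?A"
    moreover from this obtain a t where u_eq: "u = a # t"
      by (cases u) (auto simp: packed_words_def)
    ultimately have "a # t \<in> ?A"
      by simp
    note decompose = Cons_mem_wdes_insert_1_imp[OF n D this]
    then show "(case (map (unskip (hd u)) (tl u), hd u) of (w, a) \<Rightarrow> a # map (skip a) w) = u"
      using u_eq by (simp add: map_skip_unskip)
    show "(map (unskip (hd u)) (tl u), hd u) \<in> ?W \<times> {1..Suc (Suc (card D))}"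
      using decompose u_eq card_set[OF decompose(2)] by simp
    show "(case (map (unskip (hd u)) (tl u), hd u) of (w, a) \<Rightarrow> q ^ (sinv w + (a - 1))) = q ^ sinv u"
      using decompose u_eq by simp
  next
    fix p assume "p \<in> ?W \<times> {1..Suc (Suc (card D))}"
    then obtain w a where p: "p = (w, a)" "w \<in> ?W" "a \<in> {1..Suc (card (set w))}"
      using card_set by auto
    then show "(case p of (w, a) \<Rightarrow> a # map (skip a) w) \<in> ?A"
      using Cons_skip_mem_packed_words[of w n a] n
      by (auto simp: packed_words_def wdes_Cons_not_mem wdes_map_skip)
    show "(case (case p of (w, a) \<Rightarrow> a # map (skip a) w) of
        u \<Rightarrow> (map (unskip (hd u)) (tl u), hd u)) = p"
      using p by (simp add: comp_def)
  qed
  then show ?thesis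
    using sum_Sigma_power_eq_qint[of ?W q sinv "Suc (Suc (card D))"] by (simp add: wdes_gf_def)
qed

lemma wdes_gf_des_set:
  assumes "0 < n" "K \<in> comps n"
  shows "wdes_gf q n (des_set K) = QFactA q K"
  using assms
proof (induction n arbitrary: K rule: nat_induct_non_zero)
  case 1
  then have "{u \<in> packed_words 1. wdes u = des_set K} = {[1]}"
    by (auto simp: comps_Suc_0 packed_words_def packed_def wdes_def length_Suc_conv)
  then show ?case
    using 1 by (simp add: wdes_gf_def comps_Suc_0 QFactA_singleton sinv_length_1)
next
  case (Suc n K)
  from Suc.prems Suc.hyps(1) show ?case
  proof (cases rule: comps_SucE)
    case (1 K0)
    then have "is_comp K0" "K0 \<noteq> []"
      using Suc.hyps(1) by (simp_all add: comps_is_comp comps_nonempty)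
    then show ?thesis
      unfolding \<open>K = 1 # K0\<close> des_set_Cons_1[OF \<open>K0 \<noteq> []\<close>] QFactA_Cons_1
      using wdes_gf_insert_1[OF Suc.hyps(1) zero_notin_des_set[OF \<open>is_comp K0\<close>], where q = q]
        Suc.IH[OF 1(1)]
        length_eq_Suc_card_des_set[of K0]
      by simp
  next
    case (2 K0)
    then have "is_comp K0" "K0 \<noteq> []"
      using Suc.hyps(1) by (simp_all add: comps_is_comp comps_nonempty)
    then show ?thesis
      unfolding \<open>K = inc_hd K0\<close> des_set_inc_hd[OF \<open>K0 \<noteq> []\<close>] QFactA_inc_hd[OF \<open>K0 \<noteq> []\<close>]
      using wdes_gf_Suc_image[OF Suc.hyps(1) zero_notin_des_set[OF \<open>is_comp K0\<close>], where q = q]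
        Suc.IH[OF 2(1)]
        length_eq_Suc_card_des_set[of K0]
      by simp
  qed
qed

lemma WC_eq_iff_wdes_eq_des_set:
  assumes "K \<in> comps n" "0 < n" "length u = n"
  shows "WC u = K \<longleftrightarrow> wdes u = des_set K"
proof
  assume "WC u = K"
  then have "des_set K = wdes u \<inter> {1..<n}"
    using assms comp_of_des(2)[of n "wdes u"] by (simp add: WC_def)
  moreover have "wdes u \<subseteq> {1..<n}"
    using assms(3) by (auto simp: wdes_def)
  ultimately show "wdes u = des_set K"
    by auto
next
  assume "wdes u = des_set K"
  then show "WC u = K"
    using assms comp_of_des_des_set by (simp add: WC_def)
qed

lemma SJ_ones_eq_QFactA:
  fixes q :: "'a::field"
  assumes q: "q \<noteq> 0" and n: "0 < n" and K: "K \<in> comps n"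
  shows "SJ q (replicate n 1) K = QFactA q K"
proof -
  have "{u. packed u \<and> length u = sum_list K \<and> WC u = K} = {u \<in> packed_words n. wdes u = des_set K}"
    using WC_eq_iff_wdes_eq_des_set[OF K n] comps_sum_list[OF K] by (auto simp: packed_words_def)
  then have "SJ q (replicate n 1) K = (\<Sum>u\<in>{u \<in> packed_words n. wdes u = des_set K}.
      star_list q (replicate n (tildeS 1)) u)"
    by (simp add: SJ_def zeta_def)
  also have "\<dots> = wdes_gf q n (des_set K)"
    unfolding wdes_gf_def
    by (intro sum.cong refl)
      (simp add: star_list_replicate_tildeS_1[OF q, unfolded One_nat_def] packed_words_def)
  also have "\<dots> = QFactA q K"
    by (rule wdes_gf_des_set[OF n K])
  finally show ?thesis .
qed

section \<open>The coefficients \<open>e_I(q)\<close>\<close>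

lemma Lcoef_triangular_unique:
  fixes q :: "'a::field"
  assumes q: "q \<noteq> 0" and n: "0 < n"
    and zero: "\<forall>K\<in>comps n. (\<Sum>J\<in>comps n. d J * Lcoef q J K) = 0"
  shows "K \<in> comps n \<Longrightarrow> d K = 0"
proof (induction "length K" arbitrary: K rule: less_induct)
  case less
  have "(\<Sum>J\<in>comps n - {K}. d J * Lcoef q J K) = 0"
  proof (intro sum.neutral ballI)
    fix J assume J: "J \<in> comps n - {K}"
    show "d J * Lcoef q J K = 0"
    proof (cases "finer K J")
      case True
      with J less.prems n have "length J < length K"
        by (intro finer_length_less) auto
      with J less.hyps show ?thesis
        by simp
    qed (simp add: Lcoef_def)
  qed
  moreover have "(\<Sum>J\<in>comps n. d J * Lcoef q J K) = 0"
    using zero less.prems by blast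
  ultimately have "d K * Lcoef q K K = 0"
    using less.prems by (simp add: sum.remove)
  with q less.prems show ?case
    by (simp add: Lcoef_diag comps_is_comp)
qed

lemma eA_eqI:
  fixes q :: "'a::field"
  assumes q: "q \<noteq> 0" and I: "I \<in> comps n" "0 < n"
    and QFactA_expansion: "\<And>K. K \<in> comps n \<Longrightarrow> (\<Sum>J\<in>comps n. f J * Lcoef q J K) = QFactA q K"
  shows "eA q I = f I"
proof -
  have expansion: "(\<Sum>J\<in>comps n. f J * Lcoef q J K) = SJ q (replicate n 1) K" if "K \<in> comps n" for K
    using that QFactA_expansion SJ_ones_eq_QFactA[OF q I(2)] by simp
  define P where "P c \<longleftrightarrow> (\<forall>J. J \<notin> comps n \<longrightarrow> c J = 0) \<and>
    (\<forall>K\<in>comps n. (\<Sum>J\<in>comps n. c J * Lcoef q J K) = SJ q (replicate n 1) K)" for c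
  define c where "c J = (if J \<in> comps n then f J else 0)" for J
  have "P c"
    using expansion by (simp add: P_def c_def cong: sum.cong)
  moreover have "c' = c" if "P c'" for c'
  proof
    fix J
    show "c' J = c J"
    proof (cases "J \<in> comps n")
      case True
      have "\<forall>K\<in>comps n. (\<Sum>J\<in>comps n. (c' J - c J) * Lcoef q J K) = 0"
        using that \<open>P c\<close> by (simp add: P_def algebra_simps sum_subtractf)
      from Lcoef_triangular_unique[OF q I(2) this True] show ?thesis
        by simp
    qed (use that in \<open>simp add: P_def c_def\<close>)
  qed
  ultimately have "(THE c. P c) = c"
    by (rule the_equality)
  then show ?thesis
    using I(1) comps_sum_list[OF I(1)] by (simp add: eA_def P_def c_def)
qed

lemma sum_PTA_Lcoef:
  fixes q :: "'a::field"
  assumes "q \<noteq> 0" "0 < n" "K \<in> comps n"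
  shows "(\<Sum>J\<in>comps n. PTA q J * Lcoef q J K) = QFactA q K"
  using sum_Lcoef_PT_gf[OF assms, of 0] by (simp add: PTA_eq_PT_gf mult.commute)

lemma sum_RHS_Lcoef:
  fixes q :: "'a::field"
  assumes q: "q \<noteq> 0" and n: "0 < n" and K: "K \<in> comps n"
  shows "(\<Sum>J\<in>comps n. RHS q J * Lcoef q J K) = QFactA q K"
proof -
  have "(\<Sum>J\<in>comps n. RHS q J * Lcoef q J K)
      = (\<Sum>J\<in>comps n. \<Sum>J'\<in>comps n. QFactA q J' * (Lcoef q J K * Linv q J J'))"
    by (intro sum.cong refl) (simp add: RHS_eq_sum_Linv sum_distrib_left sum_distrib_right mult_ac)
  also have "\<dots> = (\<Sum>J'\<in>comps n. QFactA q J' * (\<Sum>J\<in>comps n. Lcoef q J K * Linv q J J'))"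
    by (subst sum.swap) (simp add: sum_distrib_left)
  also have "\<dots> = QFactA q K"
    using K by (simp add: sum_Lcoef_Linv[OF q n K] if_distrib cong: if_cong)
  finally show ?thesis .
qed

theorem mainTheorem1:
  fixes q :: "'a::field_char_0" and I :: "nat list"
  assumes "q \<noteq> 0" and "is_comp I" and "I \<noteq> []"
  shows "PTA q I = eA q I \<and> eA q I = RHS q I"
proof -
  define n where "n = sum_list I"
  have I: "I \<in> comps n" and n: "0 < n"
    using assms by (auto simp: comps_def n_def neq_Nil_conv)
  show ?thesis
    using eA_eqI[OF assms(1) I n sum_PTA_Lcoef[OF assms(1) n]]
      eA_eqI[OF assms(1) I n sum_RHS_Lcoef[OF assms(1) n]]
    by simp
qed

end
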